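(* In the calculus $\mathcal{L}$ described in the context, reduction preserves typing of commands: for every type $A$ and commands $c_1,c_2$, if $c_1:A$ and $c_1\rightsquigarrow c_2$, then $c_2:A$. The same holds in the ordered fragment, i.e. when all judgements $\vdash_p$ (for expressions, stacks and commands) are required to be derived without the rule (struct).
   Context: Polarities are $\varepsilon\in\{+,-\}$. Types: positive $P,Q ::= R \mid 1 \mid A\otimes B \mid A\oplus B$; negative $N,M ::= A\multimap B \mid A\,\&\,B$; $\varpi(P)=+$, $\varpi(N)=-$ ($R$ is an atomic type of resources). Fix variables and resource constants $r_n$ ($n\in\mathbb N$). Expressions $t,u$ and values $v,w$: $t,u ::= v \mid (\mathrm{let}\ x^+=t\ \mathrm{in}\ u)^+ \mid (\mathrm{let}\ x^-=v\ \mathrm{in}\ u)^+ \mid \delta(v,(x,y).t)^+ \mid \delta(v,().t)^+ \mid \delta(v,x.t,y.u)^+ \mid (v\,w)^+ \mid (\pi_1 v)^+ \mid (\pi_2 v)^+$; $v,w ::= (\mathrm{let}\ x^+=t\ \mathrm{in}\ v)^- \mid (\mathrm{let}\ x^-=v\ \mathrm{in}\ w)^- \mid \delta(v,(x,y).w)^- \mid \delta(v,().w)^- \mid \delta(v,x.w,y.w')^- \mid (v\,w)^- \mid (\pi_1 v)^- \mid (\pi_2 v)^- \mid x \mid \mathrm{new} \mid \mathrm{delete} \mid (v,w) \mid () \mid \iota_1 v \mid \iota_2 v \mid \lambda x.t \mid \langle t,u\rangle \mid r_n$. $t[v/x]$ is capture-avoiding substitution. Contexts are finite lists of typed variables. Typing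 rules ($v,w$ range over values): (var) $x:A\vdash x:A$. (struct) from $\Gamma\vdash t:A$ and a type-preserving bijection $\sigma$ from entries of $\Gamma$ to entries of $\Gamma'$ (permutation plus renaming) derive $\Gamma'\vdash t[\sigma]:A$. $\vdash\mathrm{new}:1\multimap(R\oplus 1)$; $\vdash\mathrm{delete}:R\multimap 1$. (let) from $\Delta\vdash t:A$, $\Gamma,x:A\vdash u:B$ derive $\Gamma,\Delta\vdash(\mathrm{let}\ x^{\varpi(A)}=t\ \mathrm{in}\ u)^{\varpi(B)}:B$. From $\Gamma\vdash v:A$, $\Delta\vdash w:B$ derive $\Gamma,\Delta\vdash(v,w):A\otimes B$; from $\Delta\vdash v:A\otimes B$, $\Gamma,x:A,y:B,\Gamma'\vdash t:C$ derive $\Gamma,\Delta,\Gamma'\vdash\delta(v,(x,y).t)^{\varpi(C)}:C$. $\vdash():1$; from $\Delta\vdash v:1$, $\Gamma,\Gamma'\vdash t:A$ derive $\Gamma,\Delta,\Gamma'\vdash\delta(v,().t)^{\varpi(A)}:A$. From $\Gamma\vdash v:A$ derive $\Gamma\vdash\iota_1v:A\oplus B$; from $\Gamma\vdash v:B$ derive $\Gamma\vdash\iota_2v:A\oplus B$; from $\Delta\vdash v:A\oplus B$, $\Gamma,x:A,\Gamma'\vdash t:C$, $\Gamma,y:B,\Gamma'\vdash u:C$ derive $\Gamma,\Delta,\Gamma'\vdash\delta(v,x.t,y.u)^{\varpi(C)}:C$. From $x:A,\Gamma\vdash t:B$ derive $\Gamma\vdash\lambda x.t:A\multimap B$; from $\Gamma\vdash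 w:A$, $\Delta\vdash v:A\multimap B$ derive $\Gamma,\Delta\vdash(v\,w)^{\varpi(B)}:B$. From $\Gamma\vdash t:A$, $\Gamma\vdash u:B$ derive $\Gamma\vdash\langle t,u\rangle:A\&B$; from $\Gamma\vdash v:A_1\&A_2$ derive $\Gamma\vdash(\pi_iv)^{\varpi(A_i)}:A_i$. $\vdash_p$ is generated by these rules plus the axioms $\vdash_p r_n:R$. Machine: stacks $s ::= \star \mid v^\varepsilon\cdot s \mid \pi_i^\varepsilon\cdot s \mid (x^+.u)^\varepsilon\cdot s$; lists $l ::= []\mid r_n::l$; commands $\langle t\mid s\mid l\rangle^\varepsilon$. Stack typing $s:A\vdash_p C$: $\star:A\vdash_p A$; if $s:B\vdash_p C$, $\varepsilon=\varpi(B)$ and $\vdash_p v:A$ then $v^\varepsilon\cdot s:A\multimap B\vdash_p C$; if $s:B\vdash_p C$, $\varepsilon=\varpi(B)$ and $x:A\vdash_p t:B$ then $(x^+.t)^\varepsilon\cdot s:A\vdash_p C$; if $s:A_i\vdash_p C$ and $\varepsilon=\varpi(A_i)$ then $\pi_i^\varepsilon\cdot s:A_1\&A_2\vdash_p C$. A command is typed, $\langle t\mid s\mid l\rangle^\varepsilon:A$, iff there is $B$ with $\varpi(B)=\varepsilon$, $\vdash_p t:B$ and $s:B\vdash_p A$. Reduction $\rightsquigarrow$ ($i\in\{1,2\}$): $\langle(\mathrm{let}\ x^-=v\ \mathrm{in}\ t)^\varepsilon\mid s\mid l\rangle^\varepsilon\rightsquigarrow\langle t[v/x]\mid s\mid l\rangle^\varepsilon$;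 $\langle(\mathrm{let}\ x^+=t\ \mathrm{in}\ u)^\varepsilon\mid s\mid l\rangle^\varepsilon\rightsquigarrow\langle t\mid (x^+.u)^\varepsilon\cdot s\mid l\rangle^+$; $\langle v\mid (x^+.t)^\varepsilon\cdot s\mid l\rangle^+\rightsquigarrow\langle t[v/x]\mid s\mid l\rangle^\varepsilon$; $\langle (v\,w)^\varepsilon\mid s\mid l\rangle^\varepsilon\rightsquigarrow\langle v\mid w^\varepsilon\cdot s\mid l\rangle^-$; $\langle \lambda x.t\mid v^\varepsilon\cdot s\mid l\rangle^-\rightsquigarrow\langle t[v/x]\mid s\mid l\rangle^\varepsilon$; $\langle (\pi_i v)^\varepsilon\mid s\mid l\rangle^\varepsilon\rightsquigarrow\langle v\mid \pi_i^\varepsilon\cdot s\mid l\rangle^-$; $\langle \langle t_1,t_2\rangle\mid \pi_i^\varepsilon\cdot s\mid l\rangle^-\rightsquigarrow\langle t_i\mid s\mid l\rangle^\varepsilon$; $\langle \delta((v,w),(x,y).t)^\varepsilon\mid s\mid l\rangle^\varepsilon\rightsquigarrow\langle t[v/x,w/y]\mid s\mid l\rangle^\varepsilon$; $\langle \delta((),().t)^\varepsilon\mid s\mid l\rangle^\varepsilon\rightsquigarrow\langle t\mid s\mid l\rangle^\varepsilon$; $\langle \delta(\iota_i v,x_1.t_1,x_2.t_2)^\varepsilon\mid s\mid l\rangle^\varepsilon\rightsquigarrow\langle t_i[v/x_i]\mid s\mid l\rangle^\varepsilon$; $\langle \mathrm{new}\mid ()^{\varepsilon}\cdot s\mid r_n::l\rangle^-\rightsquigarrow\langle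 \iota_1 r_n\mid s\mid l\rangle^+$; $\langle \mathrm{new}\mid ()^{\varepsilon}\cdot s\mid []\rangle^-\rightsquigarrow\langle \iota_2 ()\mid s\mid []\rangle^+$; $\langle \mathrm{delete}\mid r_n^{\varepsilon}\cdot s\mid l\rangle^-\rightsquigarrow\langle ()\mid s\mid r_n::l\rangle^+$. *)

theory Defs
  imports "HOL-Library.Multiset"
begin

datatype pol = Pos | Neg

datatype ty =
    TR
  | TOne
  | TTensor ty ty
  | TPlus ty ty
  | TLolli ty ty
  | TWith ty ty

fun varpi :: "ty \<Rightarrow> pol" where
  "varpi TR = Pos"
| "varpi TOne = Pos"
| "varpi (TTensor _ _) = Pos"
| "varpi (TPlus _ _) = Pos"
| "varpi (TLolli _ _) = Neg"
| "varpi (TWith _ _) = Neg"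

section \<open>Raw syntax (expressions and values share one raw datatype)\<close>

type_synonym var = nat

datatype tm =
    Var var
  | New
  | Delete
  | Res nat                       (* resource constant r_n *)
  | Unit
  | Pair tm tm
  | Inj1 tm
  | Inj2 tm
  | Lam var tm
  | Wth tm tm
  | Let pol pol var tm tm         (* Let px e x t u  =  (let x^px = t in u)^e, x bound in u *)
  | DTens pol tm var var tm       (* DTens e v x y t = delta(v,(x,y).t)^e *)
  | DOne pol tm tm                (* DOne e v t = delta(v,().t)^e *)
  | DSum pol tm var tm var tm     (* DSum e v x t y u = delta(v,x.t,y.u)^e *)
  | App pol tm tm
  | Prj1 pol tm
  | Prj2 pol tm

inductive isval :: "tm \<Rightarrow> bool" and isexp :: "tm \<Rightarrow> bool" where
  ex_val: "isval v \<Longrightarrow> isexp v"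
| ex_letp: "isexp t \<Longrightarrow> isexp u \<Longrightarrow> isexp (Let Pos Pos x t u)"
| ex_letn: "isval v \<Longrightarrow> isexp u \<Longrightarrow> isexp (Let Neg Pos x v u)"
| ex_dtens: "isval v \<Longrightarrow> isexp t \<Longrightarrow> isexp (DTens Pos v x y t)"
| ex_done: "isval v \<Longrightarrow> isexp t \<Longrightarrow> isexp (DOne Pos v t)"
| ex_dsum: "isval v \<Longrightarrow> isexp t \<Longrightarrow> isexp u \<Longrightarrow> isexp (DSum Pos v x t y u)"
| ex_app: "isval v \<Longrightarrow> isval w \<Longrightarrow> isexp (App Pos v w)"
| ex_prj1: "isval v \<Longrightarrow> isexp (Prj1 Pos v)"
| ex_prj2: "isval v \<Longrightarrow> isexp (Prj2 Pos v)"
| va_letp: "isexp t \<Longrightarrow> isval v \<Longrightarrow> isval (Let Pos Neg x t v)"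
| va_letn: "isval v \<Longrightarrow> isval w \<Longrightarrow> isval (Let Neg Neg x v w)"
| va_dtens: "isval v \<Longrightarrow> isval w \<Longrightarrow> isval (DTens Neg v x y w)"
| va_done: "isval v \<Longrightarrow> isval w \<Longrightarrow> isval (DOne Neg v w)"
| va_dsum: "isval v \<Longrightarrow> isval w \<Longrightarrow> isval w' \<Longrightarrow> isval (DSum Neg v x w y w')"
| va_app: "isval v \<Longrightarrow> isval w \<Longrightarrow> isval (App Neg v w)"
| va_prj1: "isval v \<Longrightarrow> isval (Prj1 Neg v)"
| va_prj2: "isval v \<Longrightarrow> isval (Prj2 Neg v)"
| va_var: "isval (Var x)"
| va_new: "isval New"
| va_delete: "isval Delete"
| va_pair: "isval v \<Longrightarrow> isval w \<Longrightarrow> isval (Pair v w)"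
| va_unit: "isval Unit"
| va_inj1: "isval v \<Longrightarrow> isval (Inj1 v)"
| va_inj2: "isval v \<Longrightarrow> isval (Inj2 v)"
| va_lam: "isexp t \<Longrightarrow> isval (Lam x t)"
| va_wth: "isexp t \<Longrightarrow> isexp u \<Longrightarrow> isval (Wth t u)"
| va_res: "isval (Res n)"

primrec fv :: "tm \<Rightarrow> var set" where
  "fv (Var x) = {x}"
| "fv New = {}"
| "fv Delete = {}"
| "fv (Res n) = {}"
| "fv Unit = {}"
| "fv (Pair a b) = fv a \<union> fv b"
| "fv (Inj1 a) = fv a"
| "fv (Inj2 a) = fv a"
| "fv (Lam x t) = fv t - {x}"
| "fv (Wth a b) = fv a \<union> fv b"
| "fv (Let p e x t u) = fv t \<union> (fv u - {x})"
| "fv (DTens e v x y t) = fv v \<union> (fv t - {x, y})"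
| "fv (DOne e v t) = fv v \<union> fv t"
| "fv (DSum e v x t y u) = fv v \<union> (fv t - {x}) \<union> (fv u - {y})"
| "fv (App e a b) = fv a \<union> fv b"
| "fv (Prj1 e a) = fv a"
| "fv (Prj2 e a) = fv a"

primrec vars :: "tm \<Rightarrow> var set" where
  "vars (Var x) = {x}"
| "vars New = {}"
| "vars Delete = {}"
| "vars (Res n) = {}"
| "vars Unit = {}"
| "vars (Pair a b) = vars a \<union> vars b"
| "vars (Inj1 a) = vars a"
| "vars (Inj2 a) = vars a"
| "vars (Lam x t) = insert x (vars t)"
| "vars (Wth a b) = vars a \<union> vars b"
| "vars (Let p e x t u) = insert x (vars t \<union> vars u)"
| "vars (DTens e v x y t) = {x, y} \<union> vars v \<union> vars t"
| "vars (DOne e v t) = vars v \<union> vars t"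
| "vars (DSum e v x t y u) = {x, y} \<union> vars v \<union> vars t \<union> vars u"
| "vars (App e a b) = vars a \<union> vars b"
| "vars (Prj1 e a) = vars a"
| "vars (Prj2 e a) = vars a"

definition sw :: "var \<Rightarrow> var \<Rightarrow> var \<Rightarrow> var" where
  "sw a b z = (if z = a then b else if z = b then a else z)"

primrec swap :: "var \<Rightarrow> var \<Rightarrow> tm \<Rightarrow> tm" where
  "swap a b (Var x) = Var (sw a b x)"
| "swap a b New = New"
| "swap a b Delete = Delete"
| "swap a b (Res n) = Res n"
| "swap a b Unit = Unit"
| "swap a b (Pair s t) = Pair (swap a b s) (swap a b t)"
| "swap a b (Inj1 s) = Inj1 (swap a b s)"
| "swap a b (Inj2 s) = Inj2 (swap a b s)"
| "swap a b (Lam x t) = Lam (sw a b x) (swap a b t)"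
| "swap a b (Wth s t) = Wth (swap a b s) (swap a b t)"
| "swap a b (Let p e x t u) = Let p e (sw a b x) (swap a b t) (swap a b u)"
| "swap a b (DTens e v x y t) = DTens e (swap a b v) (sw a b x) (sw a b y) (swap a b t)"
| "swap a b (DOne e v t) = DOne e (swap a b v) (swap a b t)"
| "swap a b (DSum e v x t y u) =
     DSum e (swap a b v) (sw a b x) (swap a b t) (sw a b y) (swap a b u)"
| "swap a b (App e s t) = App e (swap a b s) (swap a b t)"
| "swap a b (Prj1 e s) = Prj1 e (swap a b s)"
| "swap a b (Prj2 e s) = Prj2 e (swap a b s)"

lemma size_swap[simp]: "size (swap a b t) = size t"
  by (induction t) auto

definition fresh :: "var set \<Rightarrow> var" where
  "fresh S = Suc (Max (insert 0 S))"

definition img :: "(var \<Rightarrow> tm) \<Rightarrow> var set \<Rightarrow> var set" where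
  "img \<sigma> S = (\<Union>z\<in>S. fv (\<sigma> z))"

definition ren1 :: "(var \<Rightarrow> tm) \<Rightarrow> var \<Rightarrow> tm \<Rightarrow> var \<times> tm" where
  "ren1 \<sigma> x t =
     (let S = img \<sigma> (fv t - {x}) in
      if x \<notin> S then (x, t)
      else (let x' = fresh (S \<union> vars t \<union> {x}) in (x', swap x x' t)))"

definition ren2 :: "(var \<Rightarrow> tm) \<Rightarrow> var \<Rightarrow> var \<Rightarrow> tm \<Rightarrow> var \<times> var \<times> tm" where
  "ren2 \<sigma> x y t =
     (let S = img \<sigma> (fv t - {x, y}) in
      if x \<notin> S \<and> y \<notin> S then (x, y, t)
      else (let x' = fresh (S \<union> vars t \<union> {x, y});
                y' = fresh (S \<union> vars t \<union> {x, y, x'})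
            in (x', y', swap y y' (swap x x' t))))"

lemma size_ren1[simp]: "size (snd (ren1 \<sigma> x t)) = size t"
  by (simp add: ren1_def Let_def)

lemma size_ren2[simp]: "size (snd (snd (ren2 \<sigma> x y t))) = size t"
  by (simp add: ren2_def Let_def)

function psubst :: "(var \<Rightarrow> tm) \<Rightarrow> tm \<Rightarrow> tm" where
  "psubst \<sigma> (Var x) = \<sigma> x"
| "psubst \<sigma> New = New"
| "psubst \<sigma> Delete = Delete"
| "psubst \<sigma> (Res n) = Res n"
| "psubst \<sigma> Unit = Unit"
| "psubst \<sigma> (Pair a b) = Pair (psubst \<sigma> a) (psubst \<sigma> b)"
| "psubst \<sigma> (Inj1 a) = Inj1 (psubst \<sigma> a)"
| "psubst \<sigma> (Inj2 a) = Inj2 (psubst \<sigma> a)"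
| "psubst \<sigma> (Lam x t) =
     (let r = ren1 \<sigma> x t in Lam (fst r) (psubst (\<sigma>(fst r := Var (fst r))) (snd r)))"
| "psubst \<sigma> (Wth a b) = Wth (psubst \<sigma> a) (psubst \<sigma> b)"
| "psubst \<sigma> (Let p e x t u) =
     (let r = ren1 \<sigma> x u in
      Let p e (fst r) (psubst \<sigma> t) (psubst (\<sigma>(fst r := Var (fst r))) (snd r)))"
| "psubst \<sigma> (DTens e v x y t) =
     (let r = ren2 \<sigma> x y t in
      DTens e (psubst \<sigma> v) (fst r) (fst (snd r))
        (psubst (\<sigma>(fst r := Var (fst r), fst (snd r) := Var (fst (snd r)))) (snd (snd r))))"
| "psubst \<sigma> (DOne e v t) = DOne e (psubst \<sigma> v) (psubst \<sigma> t)"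
| "psubst \<sigma> (DSum e v x t y u) =
     (let r = ren1 \<sigma> x t; q = ren1 \<sigma> y u in
      DSum e (psubst \<sigma> v)
        (fst r) (psubst (\<sigma>(fst r := Var (fst r))) (snd r))
        (fst q) (psubst (\<sigma>(fst q := Var (fst q))) (snd q)))"
| "psubst \<sigma> (App e a b) = App e (psubst \<sigma> a) (psubst \<sigma> b)"
| "psubst \<sigma> (Prj1 e a) = Prj1 e (psubst \<sigma> a)"
| "psubst \<sigma> (Prj2 e a) = Prj2 e (psubst \<sigma> a)"
  by pat_completeness auto
termination
  by (relation "measure (\<lambda>(\<sigma>, t). size t)") auto

definition subst1 :: "tm \<Rightarrow> var \<Rightarrow> tm \<Rightarrow> tm" where
  "subst1 v x t = psubst (Var(x := v)) t"

definition subst2 :: "tm \<Rightarrow> var \<Rightarrow> tm \<Rightarrow> var \<Rightarrow> tm \<Rightarrow> tm" where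
  "subst2 v x w y t = psubst (Var(x := v, y := w)) t"

type_synonym ctx = "(var \<times> ty) list"

text \<open>The flag st says whether the rule (struct) is available (st = True: full system;
  st = False: ordered fragment).\<close>

inductive ptyp :: "bool \<Rightarrow> ctx \<Rightarrow> tm \<Rightarrow> ty \<Rightarrow> bool" where
  t_var: "ptyp st [(x, A)] (Var x) A"
| t_struct: "st \<Longrightarrow> ptyp st \<Gamma> t A \<Longrightarrow> distinct (map fst \<Gamma>') \<Longrightarrow>
    mset \<Gamma>' = mset (map (\<lambda>(x, B). (f x, B)) \<Gamma>) \<Longrightarrow>
    ptyp st \<Gamma>' (psubst (\<lambda>z. if z \<in> fst ` set \<Gamma> then Var (f z) else Var z) t) A"
| t_new: "ptyp st [] New (TLolli TOne (TPlus TR TOne))"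
| t_delete: "ptyp st [] Delete (TLolli TR TOne)"
| t_res: "ptyp st [] (Res n) TR"
| t_let: "ptyp st \<Delta> t A \<Longrightarrow> ptyp st (\<Gamma> @ [(x, A)]) u B \<Longrightarrow> distinct (map fst (\<Gamma> @ \<Delta>)) \<Longrightarrow>
    ptyp st (\<Gamma> @ \<Delta>) (Let (varpi A) (varpi B) x t u) B"
| t_pair: "isval v \<Longrightarrow> isval w \<Longrightarrow> ptyp st \<Gamma> v A \<Longrightarrow> ptyp st \<Delta> w B \<Longrightarrow>
    distinct (map fst (\<Gamma> @ \<Delta>)) \<Longrightarrow> ptyp st (\<Gamma> @ \<Delta>) (Pair v w) (TTensor A B)"
| t_dtens: "isval v \<Longrightarrow> ptyp st \<Delta> v (TTensor A B) \<Longrightarrow>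
    ptyp st (\<Gamma> @ [(x, A), (y, B)] @ \<Gamma>') t C \<Longrightarrow> distinct (map fst (\<Gamma> @ \<Delta> @ \<Gamma>')) \<Longrightarrow>
    ptyp st (\<Gamma> @ \<Delta> @ \<Gamma>') (DTens (varpi C) v x y t) C"
| t_unit: "ptyp st [] Unit TOne"
| t_done: "isval v \<Longrightarrow> ptyp st \<Delta> v TOne \<Longrightarrow> ptyp st (\<Gamma> @ \<Gamma>') t A \<Longrightarrow>
    distinct (map fst (\<Gamma> @ \<Delta> @ \<Gamma>')) \<Longrightarrow>
    ptyp st (\<Gamma> @ \<Delta> @ \<Gamma>') (DOne (varpi A) v t) A"
| t_inj1: "isval v \<Longrightarrow> ptyp st \<Gamma> v A \<Longrightarrow> ptyp st \<Gamma> (Inj1 v) (TPlus A B)"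
| t_inj2: "isval v \<Longrightarrow> ptyp st \<Gamma> v B \<Longrightarrow> ptyp st \<Gamma> (Inj2 v) (TPlus A B)"
| t_dsum: "isval v \<Longrightarrow> ptyp st \<Delta> v (TPlus A B) \<Longrightarrow>
    ptyp st (\<Gamma> @ [(x, A)] @ \<Gamma>') t C \<Longrightarrow> ptyp st (\<Gamma> @ [(y, B)] @ \<Gamma>') u C \<Longrightarrow>
    distinct (map fst (\<Gamma> @ \<Delta> @ \<Gamma>')) \<Longrightarrow>
    ptyp st (\<Gamma> @ \<Delta> @ \<Gamma>') (DSum (varpi C) v x t y u) C"
| t_lam: "ptyp st ((x, A) # \<Gamma>) t B \<Longrightarrow> ptyp st \<Gamma> (Lam x t) (TLolli A B)"
| t_app: "isval w \<Longrightarrow> isval v \<Longrightarrow> ptyp st \<Gamma> w A \<Longrightarrow> ptyp st \<Delta> v (TLolli A B) \<Longrightarrow>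
    distinct (map fst (\<Gamma> @ \<Delta>)) \<Longrightarrow> ptyp st (\<Gamma> @ \<Delta>) (App (varpi B) v w) B"
| t_wth: "ptyp st \<Gamma> t A \<Longrightarrow> ptyp st \<Gamma> u B \<Longrightarrow> ptyp st \<Gamma> (Wth t u) (TWith A B)"
| t_prj1: "isval v \<Longrightarrow> ptyp st \<Gamma> v (TWith A1 A2) \<Longrightarrow> ptyp st \<Gamma> (Prj1 (varpi A1) v) A1"
| t_prj2: "isval v \<Longrightarrow> ptyp st \<Gamma> v (TWith A1 A2) \<Longrightarrow> ptyp st \<Gamma> (Prj2 (varpi A2) v) A2"

datatype frame =
    FArg pol tm
  | FPrj1 pol
  | FPrj2 pol
  | FLet pol var tm

type_synonym stack = "frame list"

text \<open>A command (t, s, l, e) stands for the machine command with term t, stack s,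
  resource list l (the list of indices n of the r_n) and polarity e.\<close>
type_synonym cmd = "tm \<times> stack \<times> nat list \<times> pol"

inductive styp :: "bool \<Rightarrow> stack \<Rightarrow> ty \<Rightarrow> ty \<Rightarrow> bool" where
  s_empty: "styp st [] A A"
| s_arg: "styp st s B C \<Longrightarrow> e = varpi B \<Longrightarrow> isval v \<Longrightarrow> ptyp st [] v A \<Longrightarrow>
    styp st (FArg e v # s) (TLolli A B) C"
| s_let: "styp st s B C \<Longrightarrow> e = varpi B \<Longrightarrow> ptyp st [(x, A)] t B \<Longrightarrow>
    styp st (FLet e x t # s) A C"
| s_prj1: "styp st s A1 C \<Longrightarrow> e = varpi A1 \<Longrightarrow> styp st (FPrj1 e # s) (TWith A1 A2) C"
| s_prj2: "styp st s A2 C \<Longrightarrow> e = varpi A2 \<Longrightarrow> styp st (FPrj2 e # s) (TWith A1 A2) C"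

definition ctyp :: "bool \<Rightarrow> cmd \<Rightarrow> ty \<Rightarrow> bool" where
  "ctyp st c A = (case c of (t, s, l, e) \<Rightarrow>
     (\<exists>B. varpi B = e \<and> ptyp st [] t B \<and> styp st s B A))"

inductive red :: "cmd \<Rightarrow> cmd \<Rightarrow> bool" where
  r_letn: "red (Let Neg e x v t, s, l, e) (subst1 v x t, s, l, e)"
| r_letp: "red (Let Pos e x t u, s, l, e) (t, FLet e x u # s, l, Pos)"
| r_pop: "isval v \<Longrightarrow> red (v, FLet e x t # s, l, Pos) (subst1 v x t, s, l, e)"
| r_app: "red (App e v w, s, l, e) (v, FArg e w # s, l, Neg)"
| r_lam: "red (Lam x t, FArg e v # s, l, Neg) (subst1 v x t, s, l, e)"
| r_prj1: "red (Prj1 e v, s, l, e) (v, FPrj1 e # s, l, Neg)"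
| r_prj2: "red (Prj2 e v, s, l, e) (v, FPrj2 e # s, l, Neg)"
| r_wth1: "red (Wth t1 t2, FPrj1 e # s, l, Neg) (t1, s, l, e)"
| r_wth2: "red (Wth t1 t2, FPrj2 e # s, l, Neg) (t2, s, l, e)"
| r_dtens: "red (DTens e (Pair v w) x y t, s, l, e) (subst2 v x w y t, s, l, e)"
| r_done: "red (DOne e Unit t, s, l, e) (t, s, l, e)"
| r_dsum1: "red (DSum e (Inj1 v) x1 t1 x2 t2, s, l, e) (subst1 v x1 t1, s, l, e)"
| r_dsum2: "red (DSum e (Inj2 v) x1 t1 x2 t2, s, l, e) (subst1 v x2 t2, s, l, e)"
| r_new1: "red (New, FArg e Unit # s, n # l, Neg) (Inj1 (Res n), s, l, Pos)"
| r_new2: "red (New, FArg e Unit # s, [], Neg) (Inj2 Unit, s, [], Pos)"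
| r_delete: "red (Delete, FArg e (Res n) # s, l, Neg) (Unit, s, n # l, Pos)"

end

theory Submission
  imports Defs
begin

text \<open>Subject reduction is the usual combination of inversion of the typings of term and stack
  with a substitution lemma for closed values. What stands in the way is (struct): it renames the
  variables of the subject, so a closed typing may end in a renaming. The rule can, however, be
  replaced by plain exchange of the context without changing the derivable judgements.
  The heart of this is that typing is stable under every renaming that is injective on the
  context; since capture-avoiding substitution itself renames bound variables to fresh names, the
  induction has to carry a second, globally injective renaming of the bound variables. In the
  ordered fragment neither rule is available, and the same argument applies verbatim.\<close>

primrec map_vars :: "(var \<Rightarrow> var) \<Rightarrow> tm \<Rightarrow> tm" where
  "map_vars h (Var x) = Var (h x)"
| "map_vars h New = New"
| "map_vars h Delete = Delete"
| "map_vars h (Res n) = Res n"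
| "map_vars h Unit = Unit"
| "map_vars h (Pair s t) = Pair (map_vars h s) (map_vars h t)"
| "map_vars h (Inj1 s) = Inj1 (map_vars h s)"
| "map_vars h (Inj2 s) = Inj2 (map_vars h s)"
| "map_vars h (Lam x t) = Lam (h x) (map_vars h t)"
| "map_vars h (Wth s t) = Wth (map_vars h s) (map_vars h t)"
| "map_vars h (Let p e x t u) = Let p e (h x) (map_vars h t) (map_vars h u)"
| "map_vars h (DTens e v x y t) = DTens e (map_vars h v) (h x) (h y) (map_vars h t)"
| "map_vars h (DOne e v t) = DOne e (map_vars h v) (map_vars h t)"
| "map_vars h (DSum e v x t y u) = DSum e (map_vars h v) (h x) (map_vars h t) (h y) (map_vars h u)"
| "map_vars h (App e s t) = App e (map_vars h s) (map_vars h t)"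
| "map_vars h (Prj1 e s) = Prj1 e (map_vars h s)"
| "map_vars h (Prj2 e s) = Prj2 e (map_vars h s)"

lemma swap_eq_map_vars: "swap a b t = map_vars (sw a b) t"
  by (induction t) auto

lemma map_vars_map_vars [simp]: "map_vars h (map_vars k t) = map_vars (h \<circ> k) t"
  by (induction t) auto

lemma map_vars_id [simp]: "map_vars id t = t"
  by (induction t) auto

lemma fv_map_vars: "inj h \<Longrightarrow> fv (map_vars h t) = h ` fv t"
  by (induction t) (auto simp: image_Un image_set_diff)

lemma fv_subset_vars: "fv t \<subseteq> vars t"
  by (induction t) auto

lemma finite_vars: "finite (vars t)"
  by (induction t) auto

lemma finite_fv: "finite (fv t)"
  using fv_subset_vars finite_vars finite_subset by blast

lemma inj_sw: "inj (sw a b)"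
  unfolding inj_def sw_def by auto

lemma sw_self [simp]: "sw a a = id"
  by (auto simp: sw_def)

lemma sw_simps [simp]: "sw a b a = b" "sw a b b = a" "z \<noteq> a \<Longrightarrow> z \<noteq> b \<Longrightarrow> sw a b z = z"
  by (auto simp: sw_def)

lemma fresh_notin: "finite S \<Longrightarrow> fresh S \<notin> S"
  unfolding fresh_def using Max_ge[of "insert 0 S"] by (metis finite_insert insertCI not_less_eq_eq order_refl)

lemma finite_img: "finite S \<Longrightarrow> finite (img \<sigma> S)"
  by (simp add: img_def finite_fv)

lemma img_Var_comp [simp]: "img (Var \<circ> g) S = g ` S"
  by (auto simp: img_def)

lemma Var_comp_upd [simp]: "(Var \<circ> g)(x := Var x) = Var \<circ> g(x := x)"
  by auto

lemma ren1_spec: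
  assumes "ren1 \<sigma> x t = (x', t')"
  shows "t' = swap x x' t" "x' \<notin> img \<sigma> (fv t - {x})" "x' = x \<or> x' \<notin> insert x (vars t)"
proof -
  let ?S = "img \<sigma> (fv t - {x})"
  have fin: "finite (?S \<union> vars t \<union> {x})"
    by (simp add: finite_img finite_fv finite_vars)
  have "t' = swap x x' t \<and> x' \<notin> ?S \<and> (x' = x \<or> x' \<notin> insert x (vars t))"
  proof (cases "x \<in> ?S")
    case False
    then show ?thesis using assms by (simp add: ren1_def swap_eq_map_vars)
  next
    case True
    then have "x' = fresh (?S \<union> vars t \<union> {x})" "t' = swap x x' t"
      using assms by (auto simp: ren1_def Let_def)
    then show ?thesis using fresh_notin[OF fin] by auto
  qed
  then show "t' = swap x x' t" "x' \<notin> ?S" "x' = x \<or> x' \<notin> insert x (vars t)"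
    by auto
qed

lemma ren2_spec:
  assumes "ren2 \<sigma> x y t = (x', y', t')"
  shows "t' = swap y y' (swap x x' t)" "x' \<notin> img \<sigma> (fv t - {x, y})" "y' \<notin> img \<sigma> (fv t - {x, y})"
    "x' = x \<and> y' = y \<or> x' \<notin> {x, y} \<union> vars t \<and> y' \<notin> {x, y, x'} \<union> vars t"
proof -
  let ?S = "img \<sigma> (fv t - {x, y})"
  have fin: "finite (?S \<union> vars t \<union> {x, y})" "finite (?S \<union> vars t \<union> {x, y, x'})"
    by (simp_all add: finite_img finite_fv finite_vars)
  have "t' = swap y y' (swap x x' t) \<and> x' \<notin> ?S \<and> y' \<notin> ?S \<and>
      (x' = x \<and> y' = y \<or> x' \<notin> {x, y} \<union> vars t \<and> y' \<notin> {x, y, x'} \<union> vars t)"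
  proof (cases "x \<notin> ?S \<and> y \<notin> ?S")
    case True
    then show ?thesis using assms by (simp add: ren2_def swap_eq_map_vars)
  next
    case False
    then have "x' = fresh (?S \<union> vars t \<union> {x, y})" "y' = fresh (?S \<union> vars t \<union> {x, y, x'})"
      "t' = swap y y' (swap x x' t)"
      using assms by (auto simp: ren2_def Let_def)
    then show ?thesis using fresh_notin[OF fin(1)] fresh_notin[OF fin(2)] by auto
  qed
  then show "t' = swap y y' (swap x x' t)" "x' \<notin> ?S" "y' \<notin> ?S"
    "x' = x \<and> y' = y \<or> x' \<notin> {x, y} \<union> vars t \<and> y' \<notin> {x, y, x'} \<union> vars t"
    by auto
qed

lemma psubst_id: "\<forall>z\<in>fv t. \<sigma> z = Var z \<Longrightarrow> psubst \<sigma> t = t"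
  by (induction \<sigma> t rule: psubst.induct) (auto simp: Let_def ren1_def ren2_def img_def)

lemma psubst_Var [simp]: "psubst Var t = t"
  by (simp add: psubst_id)

lemma snd_ren1: "snd (ren1 \<sigma> x t) = map_vars (sw x (fst (ren1 \<sigma> x t))) t"
  by (metis ren1_spec(1) prod.collapse swap_eq_map_vars)

lemma snd_ren2:
  "snd (snd (ren2 \<sigma> x y t)) = map_vars (sw y (fst (snd (ren2 \<sigma> x y t))) \<circ> sw x (fst (ren2 \<sigma> x y t))) t"
  by (metis ren2_spec(1) prod.collapse swap_eq_map_vars map_vars_map_vars)

lemma isval_simps [simp]:
  "isval (Var x)" "isval New" "isval Delete" "isval (Res n)" "isval Unit"
  "isval (Pair a b) \<longleftrightarrow> isval a \<and> isval b"
  "isval (Inj1 a) \<longleftrightarrow> isval a" "isval (Inj2 a) \<longleftrightarrow> isval a"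
  "isval (Lam x t) \<longleftrightarrow> isexp t"
  "isval (Wth a b) \<longleftrightarrow> isexp a \<and> isexp b"
  "isval (Let p e x t u) \<longleftrightarrow> e = Neg \<and> (p = Pos \<and> isexp t \<and> isval u \<or> p = Neg \<and> isval t \<and> isval u)"
  "isval (DTens e v x y t) \<longleftrightarrow> e = Neg \<and> isval v \<and> isval t"
  "isval (DOne e v t) \<longleftrightarrow> e = Neg \<and> isval v \<and> isval t"
  "isval (DSum e v x t y u) \<longleftrightarrow> e = Neg \<and> isval v \<and> isval t \<and> isval u"
  "isval (App e a b) \<longleftrightarrow> e = Neg \<and> isval a \<and> isval b"
  "isval (Prj1 e a) \<longleftrightarrow> e = Neg \<and> isval a"
  "isval (Prj2 e a) \<longleftrightarrow> e = Neg \<and> isval a"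
  by (auto elim: isval.cases intro: isval_isexp.intros)

lemma isexp_simps [simp]:
  "isexp (Var x)" "isexp New" "isexp Delete" "isexp (Res n)" "isexp Unit"
  "isexp (Pair a b) \<longleftrightarrow> isval a \<and> isval b"
  "isexp (Inj1 a) \<longleftrightarrow> isval a" "isexp (Inj2 a) \<longleftrightarrow> isval a"
  "isexp (Lam x t) \<longleftrightarrow> isexp t"
  "isexp (Wth a b) \<longleftrightarrow> isexp a \<and> isexp b"
  "isexp (Let p e x t u) \<longleftrightarrow> (p = Pos \<and> isexp t \<or> p = Neg \<and> isval t) \<and> (e = Pos \<and> isexp u \<or> e = Neg \<and> isval u)"
  "isexp (DTens e v x y t) \<longleftrightarrow> isval v \<and> (e = Pos \<and> isexp t \<or> e = Neg \<and> isval t)"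
  "isexp (DOne e v t) \<longleftrightarrow> isval v \<and> (e = Pos \<and> isexp t \<or> e = Neg \<and> isval t)"
  "isexp (DSum e v x t y u) \<longleftrightarrow> isval v \<and> (e = Pos \<and> isexp t \<and> isexp u \<or> e = Neg \<and> isval t \<and> isval u)"
  "isexp (App e a b) \<longleftrightarrow> isval a \<and> isval b"
  "isexp (Prj1 e a) \<longleftrightarrow> isval a"
  "isexp (Prj2 e a) \<longleftrightarrow> isval a"
  by (auto elim: isexp.cases intro: isval_isexp.intros) (cases e; auto intro: isval_isexp.intros)+

lemma isval_map_vars [simp]: "isval (map_vars h t) \<longleftrightarrow> isval t"
  and isexp_map_vars [simp]: "isexp (map_vars h t) \<longleftrightarrow> isexp t"
  by (induction t) auto

lemma isval_fun_upd_Var: "\<forall>z. isval (\<sigma> z) \<Longrightarrow> \<forall>z. isval ((\<sigma>(a := Var a)) z)"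
  by simp

lemma isval_isexp_psubst:
  "\<forall>z. isval (\<sigma> z) \<Longrightarrow> (isval t \<longrightarrow> isval (psubst \<sigma> t)) \<and> (isexp t \<longrightarrow> isexp (psubst \<sigma> t))"
  by (induction \<sigma> t rule: psubst.induct)
    ((simp_all add: Let_def snd_ren1 snd_ren2 isval_fun_upd_Var ex_val del: fun_upd_apply), blast+)

lemma isval_psubst: "\<forall>z. isval (\<sigma> z) \<Longrightarrow> isval t \<Longrightarrow> isval (psubst \<sigma> t)"
  by (simp add: isval_isexp_psubst)

section \<open>Typing with exchange in place of (struct)\<close>

inductive xtyp :: "bool \<Rightarrow> ctx \<Rightarrow> tm \<Rightarrow> ty \<Rightarrow> bool" where
  x_var: "xtyp st [(x, A)] (Var x) A"
| x_exch: "st \<Longrightarrow> xtyp st \<Gamma> t A \<Longrightarrow> mset \<Gamma>' = mset \<Gamma> \<Longrightarrow> xtyp st \<Gamma>' t A"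
| x_new: "xtyp st [] New (TLolli TOne (TPlus TR TOne))"
| x_delete: "xtyp st [] Delete (TLolli TR TOne)"
| x_res: "xtyp st [] (Res n) TR"
| x_let: "xtyp st \<Delta> t A \<Longrightarrow> xtyp st (\<Gamma> @ [(x, A)]) u B \<Longrightarrow> distinct (map fst (\<Gamma> @ \<Delta>)) \<Longrightarrow>
    xtyp st (\<Gamma> @ \<Delta>) (Let (varpi A) (varpi B) x t u) B"
| x_pair: "isval v \<Longrightarrow> isval w \<Longrightarrow> xtyp st \<Gamma> v A \<Longrightarrow> xtyp st \<Delta> w B \<Longrightarrow>
    distinct (map fst (\<Gamma> @ \<Delta>)) \<Longrightarrow> xtyp st (\<Gamma> @ \<Delta>) (Pair v w) (TTensor A B)"
| x_dtens: "isval v \<Longrightarrow> xtyp st \<Delta> v (TTensor A B) \<Longrightarrow>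
    xtyp st (\<Gamma> @ [(x, A), (y, B)] @ \<Gamma>') t C \<Longrightarrow> distinct (map fst (\<Gamma> @ \<Delta> @ \<Gamma>')) \<Longrightarrow>
    xtyp st (\<Gamma> @ \<Delta> @ \<Gamma>') (DTens (varpi C) v x y t) C"
| x_unit: "xtyp st [] Unit TOne"
| x_done: "isval v \<Longrightarrow> xtyp st \<Delta> v TOne \<Longrightarrow> xtyp st (\<Gamma> @ \<Gamma>') t A \<Longrightarrow>
    distinct (map fst (\<Gamma> @ \<Delta> @ \<Gamma>')) \<Longrightarrow>
    xtyp st (\<Gamma> @ \<Delta> @ \<Gamma>') (DOne (varpi A) v t) A"
| x_inj1: "isval v \<Longrightarrow> xtyp st \<Gamma> v A \<Longrightarrow> xtyp st \<Gamma> (Inj1 v) (TPlus A B)"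
| x_inj2: "isval v \<Longrightarrow> xtyp st \<Gamma> v B \<Longrightarrow> xtyp st \<Gamma> (Inj2 v) (TPlus A B)"
| x_dsum: "isval v \<Longrightarrow> xtyp st \<Delta> v (TPlus A B) \<Longrightarrow>
    xtyp st (\<Gamma> @ [(x, A)] @ \<Gamma>') t C \<Longrightarrow> xtyp st (\<Gamma> @ [(y, B)] @ \<Gamma>') u C \<Longrightarrow>
    distinct (map fst (\<Gamma> @ \<Delta> @ \<Gamma>')) \<Longrightarrow>
    xtyp st (\<Gamma> @ \<Delta> @ \<Gamma>') (DSum (varpi C) v x t y u) C"
| x_lam: "xtyp st ((x, A) # \<Gamma>) t B \<Longrightarrow> xtyp st \<Gamma> (Lam x t) (TLolli A B)"
| x_app: "isval w \<Longrightarrow> isval v \<Longrightarrow> xtyp st \<Gamma> w A \<Longrightarrow> xtyp st \<Delta> v (TLolli A B) \<Longrightarrow>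
    distinct (map fst (\<Gamma> @ \<Delta>)) \<Longrightarrow> xtyp st (\<Gamma> @ \<Delta>) (App (varpi B) v w) B"
| x_wth: "xtyp st \<Gamma> t A \<Longrightarrow> xtyp st \<Gamma> u B \<Longrightarrow> xtyp st \<Gamma> (Wth t u) (TWith A B)"
| x_prj1: "isval v \<Longrightarrow> xtyp st \<Gamma> v (TWith A1 A2) \<Longrightarrow> xtyp st \<Gamma> (Prj1 (varpi A1) v) A1"
| x_prj2: "isval v \<Longrightarrow> xtyp st \<Gamma> v (TWith A1 A2) \<Longrightarrow> xtyp st \<Gamma> (Prj2 (varpi A2) v) A2"

lemma distinct_fst_mset_eq: "mset \<Gamma>' = mset \<Gamma> \<Longrightarrow> distinct (map fst \<Gamma>) \<Longrightarrow> distinct (map fst \<Gamma>')"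
  by (metis mset_eq_imp_distinct_iff mset_map)

lemma xtyp_distinct: "xtyp st \<Gamma> t A \<Longrightarrow> distinct (map fst \<Gamma>)"
  by (induction rule: xtyp.induct) (auto dest: distinct_fst_mset_eq)

lemma xtyp_fv: "xtyp st \<Gamma> t A \<Longrightarrow> fv t = fst ` set \<Gamma>"
proof (induction rule: xtyp.induct)
  case (x_exch st \<Gamma> t A \<Gamma>')
  then show ?case by (metis mset_eq_setD)
next
  case (x_let st \<Delta> t A \<Gamma> x u B)
  then show ?case using xtyp_distinct[OF x_let.hyps(2)] by auto
next
  case (x_dtens v st \<Delta> A B \<Gamma> x y \<Gamma>' t C)
  then show ?case using xtyp_distinct[OF x_dtens.hyps(3)] by auto
next
  case (x_dsum v st \<Delta> A B \<Gamma> x \<Gamma>' t C y u)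
  then show ?case using xtyp_distinct[OF x_dsum.hyps(3)] xtyp_distinct[OF x_dsum.hyps(4)] by auto
next
  case (x_lam st x A \<Gamma> t B)
  then show ?case using xtyp_distinct[OF x_lam.hyps(1)] by auto
qed auto

lemma pol_neq_iff [simp]: "p \<noteq> Pos \<longleftrightarrow> p = Neg" "p \<noteq> Neg \<longleftrightarrow> p = Pos"
  by (cases p; simp)+

lemma xtyp_isexp: "xtyp st \<Gamma> t A \<Longrightarrow> isexp t \<and> (varpi A = Neg \<longrightarrow> isval t)"
  by (induction rule: xtyp.induct) auto

lemma xtyp_Neg_isval: "xtyp st \<Gamma> t A \<Longrightarrow> varpi A = Neg \<Longrightarrow> isval t"
  using xtyp_isexp by blast

section \<open>Typing is invariant under injective renaming\<close>

lemma distinct_map_apfst: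
  "distinct (map fst \<Gamma>) \<Longrightarrow> inj_on f (fst ` set \<Gamma>) \<Longrightarrow> distinct (map fst (map (apfst f) \<Gamma>))"
  by (simp add: distinct_map comp_inj_on)

lemma map_apfst_cong: "(\<And>z. z \<in> fst ` set \<Gamma> \<Longrightarrow> f z = f' z) \<Longrightarrow> map (apfst f) \<Gamma> = map (apfst f') \<Gamma>"
  by (induction \<Gamma>) (auto simp: apfst_def map_prod_def split: prod.splits)

lemma ren1_map_vars:
  assumes ren: "ren1 (Var \<circ> g) (h x) (map_vars h u) = (x', u')"
    and h: "inj h" and fv: "fv u - {x} = D" and x: "x \<notin> D"
  shows "u' = map_vars (sw (h x) x' \<circ> h) u" "x' \<notin> g ` h ` D" "x' \<notin> h ` D"
proof -
  have fv_u': "fv (map_vars h u) - {h x} = h ` D"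
    unfolding fv[symmetric] fv_map_vars[OF h] image_set_diff[OF h] by simp
  show "u' = map_vars (sw (h x) x' \<circ> h) u"
    using ren1_spec(1)[OF ren] by (simp add: swap_eq_map_vars)
  show "x' \<notin> g ` h ` D"
    using ren1_spec(2)[OF ren] fv_u' by simp
  have "h ` D \<subseteq> vars (map_vars h u)"
    using fv_subset_vars[of "map_vars h u"] unfolding fv_u'[symmetric] by blast
  moreover have "h x \<notin> h ` D"
    using x h by (simp add: inj_image_mem_iff)
  ultimately show "x' \<notin> h ` D"
    using ren1_spec(3)[OF ren] by (metis insertCI subsetD)
qed

lemma ren2_map_vars:
  assumes ren: "ren2 (Var \<circ> g) (h x) (h y) (map_vars h u) = (x', y', u')"
    and h: "inj h" and fv: "fv u - {x, y} = D" and xy: "x \<notin> D" "y \<notin> D" "x \<noteq> y"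
  shows "u' = map_vars (sw (h y) y' \<circ> sw (h x) x' \<circ> h) u"
    "x' \<notin> g ` h ` D" "y' \<notin> g ` h ` D" "x' \<notin> h ` D" "y' \<notin> h ` D" "x' \<noteq> y'"
    "(sw (h y) y' \<circ> sw (h x) x') (h x) = x'" "(sw (h y) y' \<circ> sw (h x) x') (h y) = y'"
proof -
  have fv_u': "fv (map_vars h u) - {h x, h y} = h ` D"
    unfolding fv[symmetric] fv_map_vars[OF h] image_set_diff[OF h] by simp
  show "u' = map_vars (sw (h y) y' \<circ> sw (h x) x' \<circ> h) u"
    using ren2_spec(1)[OF ren] by (simp add: swap_eq_map_vars comp_assoc)
  show "x' \<notin> g ` h ` D" "y' \<notin> g ` h ` D"
    using ren2_spec(2,3)[OF ren] fv_u' by simp_all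
  have vars: "h ` D \<subseteq> vars (map_vars h u)"
    using fv_subset_vars[of "map_vars h u"] unfolding fv_u'[symmetric] by blast
  have hD: "h x \<notin> h ` D" "h y \<notin> h ` D" "h x \<noteq> h y"
    using xy h by (simp_all add: inj_image_mem_iff inj_eq)
  consider "x' = h x" "y' = h y"
    | "x' \<notin> {h x, h y} \<union> vars (map_vars h u)" "y' \<notin> {h x, h y, x'} \<union> vars (map_vars h u)"
    using ren2_spec(4)[OF ren] by blast
  then have "x' \<notin> h ` D \<and> y' \<notin> h ` D \<and> x' \<noteq> y' \<and>
    (sw (h y) y' \<circ> sw (h x) x') (h x) = x' \<and> (sw (h y) y' \<circ> sw (h x) x') (h y) = y'"
  proof cases
    case 1
    then show ?thesis using hD by simp
  next
    case 2
    then have "x' \<notin> h ` D" "y' \<notin> h ` D" using vars by (metis UnCI subsetD)+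
    with 2 show ?thesis using hD by (simp add: sw_def)
  qed
  then show "x' \<notin> h ` D" "y' \<notin> h ` D" "x' \<noteq> y'"
    "(sw (h y) y' \<circ> sw (h x) x') (h x) = x'" "(sw (h y) y' \<circ> sw (h x) x') (h y) = y'"
    by blast+
qed

lemma ren1_rename_context:
  assumes typing: "xtyp st \<Gamma>\<^sub>x u B" and \<Gamma>\<^sub>x: "\<Gamma>\<^sub>x = \<Gamma> @ [(x, A)] @ \<Gamma>'"
    and ren: "ren1 (Var \<circ> g) (h x) (map_vars h u) = (x', u')"
    and h: "inj h" and g: "inj_on (g \<circ> h) (fst ` set (\<Gamma> @ \<Gamma>'))"
  obtains h' g' where "inj h'" "inj_on (g' \<circ> h') (fst ` set \<Gamma>\<^sub>x)"
    "map (apfst (g' \<circ> h')) \<Gamma>\<^sub>x = map (apfst (g \<circ> h)) \<Gamma> @ [(x', A)] @ map (apfst (g \<circ> h)) \<Gamma>'"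
    "psubst (Var \<circ> g') (map_vars h' u) = psubst ((Var \<circ> g)(x' := Var x')) u'"
proof
  let ?D = "fst ` set (\<Gamma> @ \<Gamma>')"
  have "distinct (map fst (\<Gamma> @ [(x, A)] @ \<Gamma>'))"
    using xtyp_distinct[OF typing] \<Gamma>\<^sub>x by simp
  then have x: "x \<notin> ?D" by auto
  then have "fv u - {x} = ?D"
    using xtyp_fv[OF typing] \<Gamma>\<^sub>x by auto
  note R = ren1_map_vars[OF ren h this x]
  define h' where "h' = sw (h x) x' \<circ> h"
  define g' where "g' = g(x' := x')"
  have agree: "(g' \<circ> h') z = (g \<circ> h) z" if "z \<in> ?D" for z
  proof -
    have "h z \<noteq> h x" "h z \<noteq> x'"
      using that x R(3) h by (auto simp: inj_eq)
    then show ?thesis by (simp add: h'_def g'_def)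
  qed
  have x': "(g' \<circ> h') x = x'"
    by (simp add: h'_def g'_def)
  show "inj h'"
    unfolding h'_def using h inj_sw inj_compose by blast
  have "inj_on (g' \<circ> h') ?D"
    using g inj_on_cong[of ?D "g' \<circ> h'" "g \<circ> h"] agree by blast
  moreover have "(g' \<circ> h') ` ?D = (g \<circ> h) ` ?D"
    using agree by (rule image_cong[OF refl])
  ultimately show "inj_on (g' \<circ> h') (fst ` set \<Gamma>\<^sub>x)"
    using R(2) x x' \<Gamma>\<^sub>x by (simp add: image_comp)
  have "map (apfst (g' \<circ> h')) \<Gamma> = map (apfst (g \<circ> h)) \<Gamma>"
    "map (apfst (g' \<circ> h')) \<Gamma>' = map (apfst (g \<circ> h)) \<Gamma>'"
    by (rule map_apfst_cong, rule agree, force)+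
  then show "map (apfst (g' \<circ> h')) \<Gamma>\<^sub>x = map (apfst (g \<circ> h)) \<Gamma> @ [(x', A)] @ map (apfst (g \<circ> h)) \<Gamma>'"
    using x' \<Gamma>\<^sub>x by simp
  show "psubst (Var \<circ> g') (map_vars h' u) = psubst ((Var \<circ> g)(x' := Var x')) u'"
    using R(1) by (simp add: h'_def g'_def)
qed

lemma ren2_rename_context:
  assumes typing: "xtyp st \<Gamma>\<^sub>x u C" and \<Gamma>\<^sub>x: "\<Gamma>\<^sub>x = \<Gamma> @ [(x, A), (y, B)] @ \<Gamma>'"
    and ren: "ren2 (Var \<circ> g) (h x) (h y) (map_vars h u) = (x', y', u')"
    and h: "inj h" and g: "inj_on (g \<circ> h) (fst ` set (\<Gamma> @ \<Gamma>'))"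
  obtains h' g' where "inj h'" "inj_on (g' \<circ> h') (fst ` set \<Gamma>\<^sub>x)"
    "map (apfst (g' \<circ> h')) \<Gamma>\<^sub>x = map (apfst (g \<circ> h)) \<Gamma> @ [(x', A), (y', B)] @ map (apfst (g \<circ> h)) \<Gamma>'"
    "psubst (Var \<circ> g') (map_vars h' u) = psubst ((Var \<circ> g)(x' := Var x', y' := Var y')) u'"
proof
  let ?D = "fst ` set (\<Gamma> @ \<Gamma>')"
  have "distinct (map fst (\<Gamma> @ [(x, A), (y, B)] @ \<Gamma>'))"
    using xtyp_distinct[OF typing] \<Gamma>\<^sub>x by simp
  then have xy: "x \<notin> ?D" "y \<notin> ?D" "x \<noteq> y" by auto
  then have "fv u - {x, y} = ?D"
    using xtyp_fv[OF typing] \<Gamma>\<^sub>x by auto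
  note R = ren2_map_vars[OF ren h this xy]
  define h' where "h' = sw (h y) y' \<circ> sw (h x) x' \<circ> h"
  define g' where "g' = g(x' := x', y' := y')"
  have agree: "(g' \<circ> h') z = (g \<circ> h) z" if "z \<in> ?D" for z
  proof -
    have "h z \<noteq> h x" "h z \<noteq> x'" "h z \<noteq> h y" "h z \<noteq> y'"
      using that xy R(4,5) h by (auto simp: inj_eq)
    then show ?thesis by (simp add: h'_def g'_def)
  qed
  have x'y': "(g' \<circ> h') x = x'" "(g' \<circ> h') y = y'"
    using R(6,7,8) by (simp_all add: h'_def g'_def)
  show "inj h'"
    unfolding h'_def using h inj_sw inj_compose by blast
  have "inj_on (g' \<circ> h') ?D"
    using g inj_on_cong[of ?D "g' \<circ> h'" "g \<circ> h"] agree by blast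
  moreover have "(g' \<circ> h') ` ?D = (g \<circ> h) ` ?D"
    using agree by (rule image_cong[OF refl])
  ultimately show "inj_on (g' \<circ> h') (fst ` set \<Gamma>\<^sub>x)"
    using R(2,3,6) xy x'y' \<Gamma>\<^sub>x by (simp add: image_comp insert_commute)
  have "map (apfst (g' \<circ> h')) \<Gamma> = map (apfst (g \<circ> h)) \<Gamma>"
    "map (apfst (g' \<circ> h')) \<Gamma>' = map (apfst (g \<circ> h)) \<Gamma>'"
    by (rule map_apfst_cong, rule agree, force)+
  then show "map (apfst (g' \<circ> h')) \<Gamma>\<^sub>x = map (apfst (g \<circ> h)) \<Gamma> @ [(x', A), (y', B)] @ map (apfst (g \<circ> h)) \<Gamma>'"
    using x'y' \<Gamma>\<^sub>x by simp
  show "psubst (Var \<circ> g') (map_vars h' u) = psubst ((Var \<circ> g)(x' := Var x', y' := Var y')) u'"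
    using R(1) by (simp add: h'_def g'_def)
qed

lemma isval_psubst_rename: "isval v \<Longrightarrow> isval (psubst (Var \<circ> g) (map_vars h v))"
  by (simp add: isval_psubst)

text \<open>The renaming \<open>h\<close> is global and injective, \<open>g\<close> only injective on the renamed context;
  \<open>h\<close> is needed because \<open>psubst\<close> swaps bound variables for fresh ones.\<close>

definition rename_stable :: "bool \<Rightarrow> ctx \<Rightarrow> tm \<Rightarrow> ty \<Rightarrow> bool" where
  "rename_stable st \<Gamma> t A \<longleftrightarrow> (\<forall>h g. inj h \<longrightarrow> inj_on (g \<circ> h) (fst ` set \<Gamma>) \<longrightarrow>
     xtyp st (map (apfst (g \<circ> h)) \<Gamma>) (psubst (Var \<circ> g) (map_vars h t)) A)"

lemma rename_stableI:
  "(\<And>h g. inj h \<Longrightarrow> inj_on (g \<circ> h) (fst ` set \<Gamma>) \<Longrightarrow>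
     xtyp st (map (apfst (g \<circ> h)) \<Gamma>) (psubst (Var \<circ> g) (map_vars h t)) A) \<Longrightarrow>
   rename_stable st \<Gamma> t A"
  unfolding rename_stable_def by blast

lemma rename_stableD:
  "rename_stable st \<Gamma> t A \<Longrightarrow> inj h \<Longrightarrow> inj_on (g \<circ> h) (fst ` set \<Gamma>) \<Longrightarrow>
   xtyp st (map (apfst (g \<circ> h)) \<Gamma>) (psubst (Var \<circ> g) (map_vars h t)) A"
  unfolding rename_stable_def by blast

lemma rename_stable_exch:
  "rename_stable st \<Gamma> t A \<Longrightarrow> st \<Longrightarrow> mset \<Gamma>' = mset \<Gamma> \<Longrightarrow> rename_stable st \<Gamma>' t A"
  unfolding rename_stable_def by (metis mset_eq_setD mset_map xtyp.x_exch)

lemma rename_stable_Let: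
  assumes t: "rename_stable st \<Delta> t A" and u: "rename_stable st (\<Gamma> @ [(x, A)]) u B"
    and typing: "xtyp st (\<Gamma> @ [(x, A)]) u B" and dist: "distinct (map fst (\<Gamma> @ \<Delta>))"
  shows "rename_stable st (\<Gamma> @ \<Delta>) (Let (varpi A) (varpi B) x t u) B"
proof (rule rename_stableI)
  fix h g :: "var \<Rightarrow> var"
  assume h: "inj h" and g: "inj_on (g \<circ> h) (fst ` set (\<Gamma> @ \<Delta>))"
  have inj: "inj_on (g \<circ> h) (fst ` set \<Gamma>)" "inj_on (g \<circ> h) (fst ` set \<Delta>)"
    by (rule inj_on_subset[OF g], force)+
  obtain x' u' where ren: "ren1 (Var \<circ> g) (h x) (map_vars h u) = (x', u')" by fastforce
  obtain h' g' where H: "inj h'" "inj_on (g' \<circ> h') (fst ` set (\<Gamma> @ [(x, A)]))"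
    "map (apfst (g' \<circ> h')) (\<Gamma> @ [(x, A)]) = map (apfst (g \<circ> h)) \<Gamma> @ [(x', A)] @ map (apfst (g \<circ> h)) []"
    "psubst (Var \<circ> g') (map_vars h' u) = psubst ((Var \<circ> g)(x' := Var x')) u'"
    by (rule ren1_rename_context[OF typing _ ren h, where \<Gamma> = \<Gamma> and A = A and \<Gamma>' = "[]"])
      (simp_all add: inj)
  have "xtyp st (map (apfst (g \<circ> h)) \<Gamma> @ map (apfst (g \<circ> h)) \<Delta>)
      (Let (varpi A) (varpi B) x' (psubst (Var \<circ> g) (map_vars h t)) (psubst ((Var \<circ> g)(x' := Var x')) u')) B"
  proof (rule xtyp.x_let)
    show "xtyp st (map (apfst (g \<circ> h)) \<Gamma> @ [(x', A)]) (psubst ((Var \<circ> g)(x' := Var x')) u') B"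
      using rename_stableD[OF u H(1,2)] unfolding H(3,4) by simp
    show "xtyp st (map (apfst (g \<circ> h)) \<Delta>) (psubst (Var \<circ> g) (map_vars h t)) A"
      by (rule rename_stableD[OF t h inj(2)])
    show "distinct (map fst (map (apfst (g \<circ> h)) \<Gamma> @ map (apfst (g \<circ> h)) \<Delta>))"
      using distinct_map_apfst[OF dist g] unfolding map_append .
  qed
  then show "xtyp st (map (apfst (g \<circ> h)) (\<Gamma> @ \<Delta>)) (psubst (Var \<circ> g) (map_vars h (Let (varpi A) (varpi B) x t u))) B"
    using ren by (simp only: map_append map_vars.simps psubst.simps Let_def prod.sel)
qed

lemma rename_stable_Lam:
  assumes t: "rename_stable st ((x, A) # \<Gamma>) t B" and typing: "xtyp st ((x, A) # \<Gamma>) t B"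
  shows "rename_stable st \<Gamma> (Lam x t) (TLolli A B)"
proof (rule rename_stableI)
  fix h g :: "var \<Rightarrow> var"
  assume h: "inj h" and g: "inj_on (g \<circ> h) (fst ` set \<Gamma>)"
  obtain x' t' where ren: "ren1 (Var \<circ> g) (h x) (map_vars h t) = (x', t')" by fastforce
  obtain h' g' where H: "inj h'" "inj_on (g' \<circ> h') (fst ` set ((x, A) # \<Gamma>))"
    "map (apfst (g' \<circ> h')) ((x, A) # \<Gamma>) = map (apfst (g \<circ> h)) [] @ [(x', A)] @ map (apfst (g \<circ> h)) \<Gamma>"
    "psubst (Var \<circ> g') (map_vars h' t) = psubst ((Var \<circ> g)(x' := Var x')) t'"
    by (rule ren1_rename_context[OF typing _ ren h, where \<Gamma> = "[]" and A = A and \<Gamma>' = \<Gamma>])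
      (simp_all add: g)
  have "xtyp st (map (apfst (g \<circ> h)) \<Gamma>) (Lam x' (psubst ((Var \<circ> g)(x' := Var x')) t')) (TLolli A B)"
    using rename_stableD[OF t H(1,2)] unfolding H(3,4) by (simp add: xtyp.x_lam)
  then show "xtyp st (map (apfst (g \<circ> h)) \<Gamma>) (psubst (Var \<circ> g) (map_vars h (Lam x t))) (TLolli A B)"
    using ren by (simp only: map_vars.simps psubst.simps Let_def prod.sel)
qed

lemma rename_stable_DTens:
  assumes v: "isval v" "rename_stable st \<Delta> v (TTensor A B)"
    and t: "rename_stable st (\<Gamma> @ [(x, A), (y, B)] @ \<Gamma>') t C"
    and typing: "xtyp st (\<Gamma> @ [(x, A), (y, B)] @ \<Gamma>') t C"
    and dist: "distinct (map fst (\<Gamma> @ \<Delta> @ \<Gamma>'))"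
  shows "rename_stable st (\<Gamma> @ \<Delta> @ \<Gamma>') (DTens (varpi C) v x y t) C"
proof (rule rename_stableI)
  fix h g :: "var \<Rightarrow> var"
  assume h: "inj h" and g: "inj_on (g \<circ> h) (fst ` set (\<Gamma> @ \<Delta> @ \<Gamma>'))"
  have inj: "inj_on (g \<circ> h) (fst ` set \<Delta>)" "inj_on (g \<circ> h) (fst ` set (\<Gamma> @ \<Gamma>'))"
    by (rule inj_on_subset[OF g], force)+
  obtain x' y' t' where ren: "ren2 (Var \<circ> g) (h x) (h y) (map_vars h t) = (x', y', t')"
    by (metis prod.exhaust)
  obtain h' g' where H: "inj h'" "inj_on (g' \<circ> h') (fst ` set (\<Gamma> @ [(x, A), (y, B)] @ \<Gamma>'))"
    "map (apfst (g' \<circ> h')) (\<Gamma> @ [(x, A), (y, B)] @ \<Gamma>') =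
      map (apfst (g \<circ> h)) \<Gamma> @ [(x', A), (y', B)] @ map (apfst (g \<circ> h)) \<Gamma>'"
    "psubst (Var \<circ> g') (map_vars h' t) = psubst ((Var \<circ> g)(x' := Var x', y' := Var y')) t'"
    by (rule ren2_rename_context[OF typing refl ren h inj(2)])
  have "xtyp st (map (apfst (g \<circ> h)) \<Gamma> @ map (apfst (g \<circ> h)) \<Delta> @ map (apfst (g \<circ> h)) \<Gamma>')
      (DTens (varpi C) (psubst (Var \<circ> g) (map_vars h v)) x' y'
        (psubst ((Var \<circ> g)(x' := Var x', y' := Var y')) t')) C"
    using xtyp.x_dtens[OF isval_psubst_rename[OF v(1)] rename_stableD[OF v(2) h inj(1)]
        rename_stableD[OF t H(1,2), unfolded H(3,4)]
        distinct_map_apfst[OF dist g, unfolded map_append[of "apfst (g \<circ> h)"]]] .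
  then show "xtyp st (map (apfst (g \<circ> h)) (\<Gamma> @ \<Delta> @ \<Gamma>'))
      (psubst (Var \<circ> g) (map_vars h (DTens (varpi C) v x y t))) C"
    using ren by (simp only: map_append map_vars.simps psubst.simps Let_def prod.sel)
qed

lemma rename_stable_DSum:
  assumes v: "isval v" "rename_stable st \<Delta> v (TPlus A B)"
    and t: "rename_stable st (\<Gamma> @ [(x, A)] @ \<Gamma>') t C" "xtyp st (\<Gamma> @ [(x, A)] @ \<Gamma>') t C"
    and u: "rename_stable st (\<Gamma> @ [(y, B)] @ \<Gamma>') u C" "xtyp st (\<Gamma> @ [(y, B)] @ \<Gamma>') u C"
    and dist: "distinct (map fst (\<Gamma> @ \<Delta> @ \<Gamma>'))"
  shows "rename_stable st (\<Gamma> @ \<Delta> @ \<Gamma>') (DSum (varpi C) v x t y u) C"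
proof (rule rename_stableI)
  fix h g :: "var \<Rightarrow> var"
  assume h: "inj h" and g: "inj_on (g \<circ> h) (fst ` set (\<Gamma> @ \<Delta> @ \<Gamma>'))"
  have inj: "inj_on (g \<circ> h) (fst ` set \<Delta>)" "inj_on (g \<circ> h) (fst ` set (\<Gamma> @ \<Gamma>'))"
    by (rule inj_on_subset[OF g], force)+
  obtain x' t' where ren_t: "ren1 (Var \<circ> g) (h x) (map_vars h t) = (x', t')" by fastforce
  obtain y' u' where ren_u: "ren1 (Var \<circ> g) (h y) (map_vars h u) = (y', u')" by fastforce
  obtain h\<^sub>1 g\<^sub>1 where H\<^sub>1: "inj h\<^sub>1" "inj_on (g\<^sub>1 \<circ> h\<^sub>1) (fst ` set (\<Gamma> @ [(x, A)] @ \<Gamma>'))"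
    "map (apfst (g\<^sub>1 \<circ> h\<^sub>1)) (\<Gamma> @ [(x, A)] @ \<Gamma>') = map (apfst (g \<circ> h)) \<Gamma> @ [(x', A)] @ map (apfst (g \<circ> h)) \<Gamma>'"
    "psubst (Var \<circ> g\<^sub>1) (map_vars h\<^sub>1 t) = psubst ((Var \<circ> g)(x' := Var x')) t'"
    by (rule ren1_rename_context[OF t(2) refl ren_t h inj(2)])
  obtain h\<^sub>2 g\<^sub>2 where H\<^sub>2: "inj h\<^sub>2" "inj_on (g\<^sub>2 \<circ> h\<^sub>2) (fst ` set (\<Gamma> @ [(y, B)] @ \<Gamma>'))"
    "map (apfst (g\<^sub>2 \<circ> h\<^sub>2)) (\<Gamma> @ [(y, B)] @ \<Gamma>') = map (apfst (g \<circ> h)) \<Gamma> @ [(y', B)] @ map (apfst (g \<circ> h)) \<Gamma>'"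
    "psubst (Var \<circ> g\<^sub>2) (map_vars h\<^sub>2 u) = psubst ((Var \<circ> g)(y' := Var y')) u'"
    by (rule ren1_rename_context[OF u(2) refl ren_u h inj(2)])
  have "xtyp st (map (apfst (g \<circ> h)) \<Gamma> @ map (apfst (g \<circ> h)) \<Delta> @ map (apfst (g \<circ> h)) \<Gamma>')
      (DSum (varpi C) (psubst (Var \<circ> g) (map_vars h v)) x' (psubst ((Var \<circ> g)(x' := Var x')) t')
        y' (psubst ((Var \<circ> g)(y' := Var y')) u')) C"
    using xtyp.x_dsum[OF isval_psubst_rename[OF v(1)] rename_stableD[OF v(2) h inj(1)]
        rename_stableD[OF t(1) H\<^sub>1(1,2), unfolded H\<^sub>1(3,4)] rename_stableD[OF u(1) H\<^sub>2(1,2), unfolded H\<^sub>2(3,4)]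
        distinct_map_apfst[OF dist g, unfolded map_append[of "apfst (g \<circ> h)"]]] .
  then show "xtyp st (map (apfst (g \<circ> h)) (\<Gamma> @ \<Delta> @ \<Gamma>'))
      (psubst (Var \<circ> g) (map_vars h (DSum (varpi C) v x t y u))) C"
    using ren_t ren_u by (simp only: map_append map_vars.simps psubst.simps Let_def prod.sel)
qed

lemma rename_stable_Pair:
  assumes "isval v" "isval w" "rename_stable st \<Gamma> v A" "rename_stable st \<Delta> w B"
    and dist: "distinct (map fst (\<Gamma> @ \<Delta>))"
  shows "rename_stable st (\<Gamma> @ \<Delta>) (Pair v w) (TTensor A B)"
proof (rule rename_stableI)
  fix h g :: "var \<Rightarrow> var"
  assume h: "inj h" and g: "inj_on (g \<circ> h) (fst ` set (\<Gamma> @ \<Delta>))"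
  have inj: "inj_on (g \<circ> h) (fst ` set \<Gamma>)" "inj_on (g \<circ> h) (fst ` set \<Delta>)"
    by (rule inj_on_subset[OF g], force)+
  show "xtyp st (map (apfst (g \<circ> h)) (\<Gamma> @ \<Delta>)) (psubst (Var \<circ> g) (map_vars h (Pair v w))) (TTensor A B)"
    using xtyp.x_pair[OF isval_psubst_rename[OF assms(1)] isval_psubst_rename[OF assms(2)]
        rename_stableD[OF assms(3) h inj(1)] rename_stableD[OF assms(4) h inj(2)]
        distinct_map_apfst[OF dist g, unfolded map_append[of "apfst (g \<circ> h)"]]]
    by (simp only: map_append map_vars.simps psubst.simps)
qed

lemma rename_stable_App:
  assumes "isval w" "isval v" "rename_stable st \<Gamma> w A" "rename_stable st \<Delta> v (TLolli A B)"
    and dist: "distinct (map fst (\<Gamma> @ \<Delta>))"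
  shows "rename_stable st (\<Gamma> @ \<Delta>) (App (varpi B) v w) B"
proof (rule rename_stableI)
  fix h g :: "var \<Rightarrow> var"
  assume h: "inj h" and g: "inj_on (g \<circ> h) (fst ` set (\<Gamma> @ \<Delta>))"
  have inj: "inj_on (g \<circ> h) (fst ` set \<Gamma>)" "inj_on (g \<circ> h) (fst ` set \<Delta>)"
    by (rule inj_on_subset[OF g], force)+
  show "xtyp st (map (apfst (g \<circ> h)) (\<Gamma> @ \<Delta>)) (psubst (Var \<circ> g) (map_vars h (App (varpi B) v w))) B"
    using xtyp.x_app[OF isval_psubst_rename[OF assms(1)] isval_psubst_rename[OF assms(2)]
        rename_stableD[OF assms(3) h inj(1)] rename_stableD[OF assms(4) h inj(2)]
        distinct_map_apfst[OF dist g, unfolded map_append[of "apfst (g \<circ> h)"]]]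
    by (simp only: map_append map_vars.simps psubst.simps)
qed

lemma rename_stable_DOne:
  assumes "isval v" "rename_stable st \<Delta> v TOne" "rename_stable st (\<Gamma> @ \<Gamma>') t A"
    and dist: "distinct (map fst (\<Gamma> @ \<Delta> @ \<Gamma>'))"
  shows "rename_stable st (\<Gamma> @ \<Delta> @ \<Gamma>') (DOne (varpi A) v t) A"
proof (rule rename_stableI)
  fix h g :: "var \<Rightarrow> var"
  assume h: "inj h" and g: "inj_on (g \<circ> h) (fst ` set (\<Gamma> @ \<Delta> @ \<Gamma>'))"
  have inj: "inj_on (g \<circ> h) (fst ` set \<Delta>)" "inj_on (g \<circ> h) (fst ` set (\<Gamma> @ \<Gamma>'))"
    by (rule inj_on_subset[OF g], force)+
  show "xtyp st (map (apfst (g \<circ> h)) (\<Gamma> @ \<Delta> @ \<Gamma>')) (psubst (Var \<circ> g) (map_vars h (DOne (varpi A) v t))) A"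
    using xtyp.x_done[OF isval_psubst_rename[OF assms(1)] rename_stableD[OF assms(2) h inj(1)]
        rename_stableD[OF assms(3) h inj(2), unfolded map_append]
        distinct_map_apfst[OF dist g, unfolded map_append[of "apfst (g \<circ> h)"]]]
    by (simp only: map_append map_vars.simps psubst.simps)
qed

lemma xtyp_rename_stable: "xtyp st \<Gamma> t A \<Longrightarrow> rename_stable st \<Gamma> t A"
proof (induction rule: xtyp.induct)
  case (x_exch st \<Gamma> t A \<Gamma>')
  then show ?case by (blast intro: rename_stable_exch)
next
  case (x_prj1 v st \<Gamma> A\<^sub>1 A\<^sub>2)
  then show ?case
    by (auto intro!: rename_stableI xtyp.x_prj1[of _ _ _ _ A\<^sub>2] isval_psubst_rename dest: rename_stableD)
next
  case (x_prj2 v st \<Gamma> A\<^sub>1 A\<^sub>2)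
  then show ?case
    by (auto intro!: rename_stableI xtyp.x_prj2[of _ _ _ A\<^sub>1] isval_psubst_rename dest: rename_stableD)
qed (auto intro: rename_stable_Let rename_stable_Lam rename_stable_DTens
    rename_stable_DSum rename_stable_Pair rename_stable_App rename_stable_DOne,
  auto simp: rename_stable_def intro!: x_var x_new x_delete x_res x_unit x_inj1 x_inj2 x_wth isval_psubst_rename)

lemma xtyp_rename:
  assumes "xtyp st \<Gamma> t A" and "inj_on g (fst ` set \<Gamma>)"
  shows "xtyp st (map (apfst g) \<Gamma>) (psubst (Var \<circ> g) t) A"
  using rename_stableD[OF xtyp_rename_stable[OF assms(1)], of id g] assms(2) by simp

lemma xtyp_imp_ptyp: "xtyp st \<Gamma> t A \<Longrightarrow> ptyp st \<Gamma> t A"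
proof (induction rule: xtyp.induct)
  case (x_exch st \<Gamma> t A \<Gamma>')
  \<comment> \<open>(struct) with the identity renaming\<close>
  have "ptyp st \<Gamma>' (psubst (\<lambda>z. if z \<in> fst ` set \<Gamma> then Var z else Var z) t) A"
    using x_exch distinct_fst_mset_eq[OF x_exch.hyps(3) xtyp_distinct[OF x_exch.hyps(2)]]
    by (intro t_struct) (auto simp: case_prod_unfold)
  then show ?case by simp
qed (auto intro: ptyp.intros)

lemma ptyp_imp_xtyp: "ptyp st \<Gamma> t A \<Longrightarrow> xtyp st \<Gamma> t A"
proof (induction rule: ptyp.induct)
  case (t_struct st \<Gamma> t A \<Gamma>' f)
  define g where "g z = (if z \<in> fst ` set \<Gamma> then f z else z)" for z
  have ctx: "map (\<lambda>(x, B). (f x, B)) \<Gamma> = map (apfst g) \<Gamma>"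
    by (auto simp: g_def rev_image_eqI)
  have "inj_on g (fst ` set \<Gamma>)"
    using distinct_fst_mset_eq[OF t_struct.hyps(4)[symmetric] t_struct.hyps(3)] ctx
    by (simp add: distinct_map inj_on_def g_def) blast
  then have "xtyp st (map (\<lambda>(x, B). (f x, B)) \<Gamma>) (psubst (Var \<circ> g) t) A"
    unfolding ctx by (rule xtyp_rename[OF t_struct.IH])
  moreover have "Var \<circ> g = (\<lambda>z. if z \<in> fst ` set \<Gamma> then Var (f z) else Var z)"
    by (auto simp: g_def)
  ultimately show ?case
    using t_struct.hyps(1,4) by (auto intro: x_exch)
qed (auto intro: xtyp.intros)

lemma ptyp_eq_xtyp: "ptyp = xtyp"
  using xtyp_imp_ptyp ptyp_imp_xtyp by blast

section \<open>Substitution of closed values\<close>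

abbreviation remove_vars :: "var set \<Rightarrow> ctx \<Rightarrow> ctx" where
  "remove_vars X \<Gamma> \<equiv> filter (\<lambda>p. fst p \<notin> X) \<Gamma>"

definition closes :: "bool \<Rightarrow> (var \<Rightarrow> tm) \<Rightarrow> var set \<Rightarrow> ctx \<Rightarrow> bool" where
  "closes st \<sigma> X \<Gamma> \<longleftrightarrow> (\<forall>z. z \<notin> X \<longrightarrow> \<sigma> z = Var z) \<and> (\<forall>z\<in>X. isval (\<sigma> z) \<and> fv (\<sigma> z) = {}) \<and>
     (\<forall>(z, C)\<in>set \<Gamma>. z \<in> X \<longrightarrow> xtyp st [] (\<sigma> z) C)"

lemma closes_isval: "closes st \<sigma> X \<Gamma> \<Longrightarrow> isval (\<sigma> z)"
  unfolding closes_def by (metis isval_simps(1))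

lemma isval_psubst_closes: "closes st \<sigma> X \<Gamma> \<Longrightarrow> isval v \<Longrightarrow> isval (psubst \<sigma> v)"
  by (simp add: isval_psubst closes_isval)

lemma closes_append [simp]: "closes st \<sigma> X (\<Gamma> @ \<Delta>) \<longleftrightarrow> closes st \<sigma> X \<Gamma> \<and> closes st \<sigma> X \<Delta>"
  unfolding closes_def by auto

lemma closes_bind:
  "closes st \<sigma> X \<Gamma> \<Longrightarrow> set \<Gamma>' \<subseteq> insert (x, A) (set \<Gamma>) \<Longrightarrow> closes st (\<sigma>(x := Var x)) (X - {x}) \<Gamma>'"
  unfolding closes_def by auto

lemma ren1_closes: "closes st \<sigma> X \<Gamma> \<Longrightarrow> ren1 \<sigma> x t = (x, t)"
  unfolding closes_def ren1_def img_def by (auto simp: Let_def split: if_splits)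

lemma ren2_closes: "closes st \<sigma> X \<Gamma> \<Longrightarrow> ren2 \<sigma> x y t = (x, y, t)"
  unfolding closes_def ren2_def img_def by (auto simp: Let_def split: if_splits)

lemma remove_vars_bound: "x \<notin> fst ` set \<Gamma> \<Longrightarrow> remove_vars (X - {x}) \<Gamma> = remove_vars X \<Gamma>"
  by (induction \<Gamma>) auto

definition subst_stable :: "bool \<Rightarrow> ctx \<Rightarrow> tm \<Rightarrow> ty \<Rightarrow> bool" where
  "subst_stable st \<Gamma> t A \<longleftrightarrow> (\<forall>\<sigma> X. closes st \<sigma> X \<Gamma> \<longrightarrow> xtyp st (remove_vars X \<Gamma>) (psubst \<sigma> t) A)"

lemma subst_stableI:
  "(\<And>\<sigma> X. closes st \<sigma> X \<Gamma> \<Longrightarrow> xtyp st (remove_vars X \<Gamma>) (psubst \<sigma> t) A) \<Longrightarrow> subst_stable st \<Gamma> t A"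
  unfolding subst_stable_def by blast

lemma subst_stableD: "subst_stable st \<Gamma> t A \<Longrightarrow> closes st \<sigma> X \<Gamma> \<Longrightarrow> xtyp st (remove_vars X \<Gamma>) (psubst \<sigma> t) A"
  unfolding subst_stable_def by blast

lemma subst_stable_bind:
  assumes u: "subst_stable st (\<Gamma> @ [(x, A)] @ \<Gamma>') u B" and typing: "xtyp st (\<Gamma> @ [(x, A)] @ \<Gamma>') u B"
    and cl: "closes st \<sigma> X (\<Gamma> @ \<Delta> @ \<Gamma>')"
  shows "xtyp st (remove_vars X \<Gamma> @ [(x, A)] @ remove_vars X \<Gamma>') (psubst (\<sigma>(x := Var x)) u) B"
proof -
  have x: "x \<notin> fst ` set \<Gamma>" "x \<notin> fst ` set \<Gamma>'"
    using xtyp_distinct[OF typing] by auto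
  have "closes st (\<sigma>(x := Var x)) (X - {x}) (\<Gamma> @ [(x, A)] @ \<Gamma>')"
    by (rule closes_bind[OF cl]) auto
  from subst_stableD[OF u this] show ?thesis
    unfolding filter_append remove_vars_bound[OF x(1)] remove_vars_bound[OF x(2)]
    by (simp add: fun_upd_def)
qed

lemma subst_stable_bind2:
  assumes u: "subst_stable st (\<Gamma> @ [(x, A), (y, B)] @ \<Gamma>') u C"
    and typing: "xtyp st (\<Gamma> @ [(x, A), (y, B)] @ \<Gamma>') u C" and cl: "closes st \<sigma> X (\<Gamma> @ \<Delta> @ \<Gamma>')"
  shows "xtyp st (remove_vars X \<Gamma> @ [(x, A), (y, B)] @ remove_vars X \<Gamma>')
    (psubst (\<sigma>(x := Var x, y := Var y)) u) C"
proof -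
  have xy: "x \<notin> fst ` set \<Gamma>" "x \<notin> fst ` set \<Gamma>'" "y \<notin> fst ` set \<Gamma>" "y \<notin> fst ` set \<Gamma>'"
    using xtyp_distinct[OF typing] by auto
  have "closes st (\<sigma>(x := Var x)) (X - {x}) ((x, A) # \<Gamma> @ \<Delta> @ \<Gamma>')"
    by (rule closes_bind[OF cl]) auto
  then have "closes st (\<sigma>(x := Var x, y := Var y)) (X - {x} - {y}) (\<Gamma> @ [(x, A), (y, B)] @ \<Gamma>')"
    by (rule closes_bind) auto
  from subst_stableD[OF u this] show ?thesis
    unfolding filter_append remove_vars_bound[OF xy(3)] remove_vars_bound[OF xy(4)]
      remove_vars_bound[OF xy(1)] remove_vars_bound[OF xy(2)]
    by (simp add: fun_upd_def)
qed

lemma subst_stable_Let: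
  assumes t: "subst_stable st \<Delta> t A" and u: "subst_stable st (\<Gamma> @ [(x, A)]) u B"
    and typing: "xtyp st (\<Gamma> @ [(x, A)]) u B" and dist: "distinct (map fst (\<Gamma> @ \<Delta>))"
  shows "subst_stable st (\<Gamma> @ \<Delta>) (Let (varpi A) (varpi B) x t u) B"
proof (rule subst_stableI)
  fix \<sigma> X assume cl: "closes st \<sigma> X (\<Gamma> @ \<Delta>)"
  have "xtyp st (remove_vars X \<Gamma> @ [(x, A)]) (psubst (\<sigma>(x := Var x)) u) B"
    using subst_stable_bind[of st \<Gamma> x A "[]"] u typing cl by simp
  then have "xtyp st (remove_vars X \<Gamma> @ remove_vars X \<Delta>)
      (Let (varpi A) (varpi B) x (psubst \<sigma> t) (psubst (\<sigma>(x := Var x)) u)) B"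
    using xtyp.x_let[OF subst_stableD[OF t] _ distinct_map_filter[OF dist, unfolded filter_append]] cl
    by simp
  then show "xtyp st (remove_vars X (\<Gamma> @ \<Delta>)) (psubst \<sigma> (Let (varpi A) (varpi B) x t u)) B"
    using ren1_closes[OF cl] by (simp add: Let_def)
qed

lemma subst_stable_Lam:
  assumes t: "subst_stable st ((x, A) # \<Gamma>) t B" and typing: "xtyp st ((x, A) # \<Gamma>) t B"
  shows "subst_stable st \<Gamma> (Lam x t) (TLolli A B)"
proof (rule subst_stableI)
  fix \<sigma> X assume cl: "closes st \<sigma> X \<Gamma>"
  have "xtyp st ([(x, A)] @ remove_vars X \<Gamma>) (psubst (\<sigma>(x := Var x)) t) B"
    using subst_stable_bind[of st "[]" x A \<Gamma> t B \<sigma> X "[]"] t typing cl by simp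
  then show "xtyp st (remove_vars X \<Gamma>) (psubst \<sigma> (Lam x t)) (TLolli A B)"
    using ren1_closes[OF cl] by (simp add: Let_def xtyp.x_lam)
qed

lemma subst_stable_DTens:
  assumes v: "isval v" "subst_stable st \<Delta> v (TTensor A B)"
    and t: "subst_stable st (\<Gamma> @ [(x, A), (y, B)] @ \<Gamma>') t C" "xtyp st (\<Gamma> @ [(x, A), (y, B)] @ \<Gamma>') t C"
    and dist: "distinct (map fst (\<Gamma> @ \<Delta> @ \<Gamma>'))"
  shows "subst_stable st (\<Gamma> @ \<Delta> @ \<Gamma>') (DTens (varpi C) v x y t) C"
proof (rule subst_stableI)
  fix \<sigma> X assume cl: "closes st \<sigma> X (\<Gamma> @ \<Delta> @ \<Gamma>')"
  have "xtyp st (remove_vars X \<Gamma> @ remove_vars X \<Delta> @ remove_vars X \<Gamma>')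
      (DTens (varpi C) (psubst \<sigma> v) x y (psubst (\<sigma>(x := Var x, y := Var y)) t)) C"
    using xtyp.x_dtens[OF isval_psubst[OF _ v(1)] subst_stableD[OF v(2)] subst_stable_bind2[OF t cl]
        distinct_map_filter[OF dist, unfolded filter_append]] cl
    by (simp add: closes_isval)
  then show "xtyp st (remove_vars X (\<Gamma> @ \<Delta> @ \<Gamma>')) (psubst \<sigma> (DTens (varpi C) v x y t)) C"
    using ren2_closes[OF cl] by (simp add: Let_def)
qed

lemma subst_stable_DSum:
  assumes v: "isval v" "subst_stable st \<Delta> v (TPlus A B)"
    and t: "subst_stable st (\<Gamma> @ [(x, A)] @ \<Gamma>') t C" "xtyp st (\<Gamma> @ [(x, A)] @ \<Gamma>') t C"
    and u: "subst_stable st (\<Gamma> @ [(y, B)] @ \<Gamma>') u C" "xtyp st (\<Gamma> @ [(y, B)] @ \<Gamma>') u C"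
    and dist: "distinct (map fst (\<Gamma> @ \<Delta> @ \<Gamma>'))"
  shows "subst_stable st (\<Gamma> @ \<Delta> @ \<Gamma>') (DSum (varpi C) v x t y u) C"
proof (rule subst_stableI)
  fix \<sigma> X assume cl: "closes st \<sigma> X (\<Gamma> @ \<Delta> @ \<Gamma>')"
  have "xtyp st (remove_vars X \<Gamma> @ remove_vars X \<Delta> @ remove_vars X \<Gamma>')
      (DSum (varpi C) (psubst \<sigma> v) x (psubst (\<sigma>(x := Var x)) t) y (psubst (\<sigma>(y := Var y)) u)) C"
    using xtyp.x_dsum[OF isval_psubst[OF _ v(1)] subst_stableD[OF v(2)]
        subst_stable_bind[OF t cl] subst_stable_bind[OF u cl]
        distinct_map_filter[OF dist, unfolded filter_append]] cl
    by (simp add: closes_isval)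
  then show "xtyp st (remove_vars X (\<Gamma> @ \<Delta> @ \<Gamma>')) (psubst \<sigma> (DSum (varpi C) v x t y u)) C"
    using ren1_closes[OF cl] by (simp add: Let_def)
qed

lemma subst_stable_Pair:
  assumes "isval v" "isval w" "subst_stable st \<Gamma> v A" "subst_stable st \<Delta> w B"
    and dist: "distinct (map fst (\<Gamma> @ \<Delta>))"
  shows "subst_stable st (\<Gamma> @ \<Delta>) (Pair v w) (TTensor A B)"
  using xtyp.x_pair[OF isval_psubst[OF _ assms(1)] isval_psubst[OF _ assms(2)]
      subst_stableD[OF assms(3)] subst_stableD[OF assms(4)] distinct_map_filter[OF dist, unfolded filter_append]]
  by (auto intro!: subst_stableI simp: closes_isval)

lemma subst_stable_App:
  assumes "isval w" "isval v" "subst_stable st \<Gamma> w A" "subst_stable st \<Delta> v (TLolli A B)"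
    and dist: "distinct (map fst (\<Gamma> @ \<Delta>))"
  shows "subst_stable st (\<Gamma> @ \<Delta>) (App (varpi B) v w) B"
  using xtyp.x_app[OF isval_psubst[OF _ assms(1)] isval_psubst[OF _ assms(2)]
      subst_stableD[OF assms(3)] subst_stableD[OF assms(4)] distinct_map_filter[OF dist, unfolded filter_append]]
  by (auto intro!: subst_stableI simp: closes_isval)

lemma subst_stable_DOne:
  assumes "isval v" "subst_stable st \<Delta> v TOne" "subst_stable st (\<Gamma> @ \<Gamma>') t A"
    and dist: "distinct (map fst (\<Gamma> @ \<Delta> @ \<Gamma>'))"
  shows "subst_stable st (\<Gamma> @ \<Delta> @ \<Gamma>') (DOne (varpi A) v t) A"
  using xtyp.x_done[OF isval_psubst[OF _ assms(1)] subst_stableD[OF assms(2)]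
      subst_stableD[OF assms(3), unfolded filter_append] distinct_map_filter[OF dist, unfolded filter_append]]
  by (auto intro!: subst_stableI simp: closes_isval)

lemma subst_stable_exch:
  assumes "subst_stable st \<Gamma> t A" and st and mset: "mset \<Gamma>' = mset \<Gamma>"
  shows "subst_stable st \<Gamma>' t A"
proof (rule subst_stableI)
  fix \<sigma> X assume "closes st \<sigma> X \<Gamma>'"
  then have "closes st \<sigma> X \<Gamma>"
    using mset_eq_setD[OF mset] by (simp add: closes_def)
  then have "xtyp st (remove_vars X \<Gamma>) (psubst \<sigma> t) A"
    by (rule subst_stableD[OF assms(1)])
  then show "xtyp st (remove_vars X \<Gamma>') (psubst \<sigma> t) A"
    by (rule x_exch[OF \<open>st\<close>]) (simp add: mset)
qed

lemma xtyp_subst_stable: "xtyp st \<Gamma> t A \<Longrightarrow> subst_stable st \<Gamma> t A"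
proof (induction rule: xtyp.induct)
  case (x_var st x A)
  then show ?case by (auto intro!: subst_stableI xtyp.x_var simp: closes_def)
next
  case (x_exch st \<Gamma> t A \<Gamma>')
  then show ?case by (blast intro: subst_stable_exch)
next
  case (x_prj1 v st \<Gamma> A\<^sub>1 A\<^sub>2)
  then show ?case
    by (auto intro!: subst_stableI xtyp.x_prj1[of _ _ _ _ A\<^sub>2] isval_psubst_closes dest: subst_stableD)
next
  case (x_prj2 v st \<Gamma> A\<^sub>1 A\<^sub>2)
  then show ?case
    by (auto intro!: subst_stableI xtyp.x_prj2[of _ _ _ A\<^sub>1] isval_psubst_closes dest: subst_stableD)
qed (auto intro: subst_stable_Let subst_stable_Lam subst_stable_DTens
    subst_stable_DSum subst_stable_Pair subst_stable_App subst_stable_DOne,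
  auto simp: subst_stable_def intro!: x_new x_delete x_res x_unit x_inj1 x_inj2 x_wth isval_psubst_closes)

lemma xtyp_subst1:
  assumes "xtyp st [(x, A)] t B" "xtyp st [] v A" "isval v"
  shows "xtyp st [] (subst1 v x t) B"
proof -
  have "closes st (Var(x := v)) {x} [(x, A)]"
    using assms(2,3) xtyp_fv[OF assms(2)] by (simp add: closes_def)
  from subst_stableD[OF xtyp_subst_stable[OF assms(1)] this] show ?thesis
    by (simp add: subst1_def)
qed

lemma xtyp_subst2:
  assumes "xtyp st [(x, A), (y, B)] t C" "xtyp st [] v A" "xtyp st [] w B" "isval v" "isval w"
  shows "xtyp st [] (subst2 v x w y t) C"
proof -
  have "x \<noteq> y"
    using xtyp_distinct[OF assms(1)] by simp
  then have "closes st (Var(x := v, y := w)) {x, y} [(x, A), (y, B)]"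
    using assms(2-5) xtyp_fv[OF assms(2)] xtyp_fv[OF assms(3)] by (simp add: closes_def)
  from subst_stableD[OF xtyp_subst_stable[OF assms(1)] this] show ?thesis
    by (simp add: subst2_def)
qed

section \<open>Inversion of closed typings\<close>

lemma xtyp_Nil_LetE:
  assumes "xtyp st [] (Let p e x t u) B"
  obtains A where "varpi A = p" "varpi B = e" "xtyp st [] t A" "xtyp st [(x, A)] u B"
  using assms by (induction st "[] :: ctx" "Let p e x t u" B rule: xtyp.induct) auto

lemma xtyp_Nil_AppE:
  assumes "xtyp st [] (App e v w) B"
  obtains A where "varpi B = e" "isval w" "xtyp st [] w A" "xtyp st [] v (TLolli A B)"
  using assms by (induction st "[] :: ctx" "App e v w" B rule: xtyp.induct) auto

lemma xtyp_Nil_LamE: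
  assumes "xtyp st [] (Lam x t) C"
  obtains A B where "C = TLolli A B" "xtyp st [(x, A)] t B"
  using assms by (induction st "[] :: ctx" "Lam x t" C rule: xtyp.induct) auto

lemma xtyp_Nil_Prj1E:
  assumes "xtyp st [] (Prj1 e v) C"
  obtains A\<^sub>2 where "varpi C = e" "xtyp st [] v (TWith C A\<^sub>2)"
  using assms by (induction st "[] :: ctx" "Prj1 e v" C rule: xtyp.induct) auto

lemma xtyp_Nil_Prj2E:
  assumes "xtyp st [] (Prj2 e v) C"
  obtains A\<^sub>1 where "varpi C = e" "xtyp st [] v (TWith A\<^sub>1 C)"
  using assms by (induction st "[] :: ctx" "Prj2 e v" C rule: xtyp.induct) auto

lemma xtyp_Nil_WthE:
  assumes "xtyp st [] (Wth t u) C"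
  obtains A B where "C = TWith A B" "xtyp st [] t A" "xtyp st [] u B"
  using assms by (induction st "[] :: ctx" "Wth t u" C rule: xtyp.induct) auto

lemma xtyp_Nil_DTensE:
  assumes "xtyp st [] (DTens e v x y t) C"
  obtains A B where "varpi C = e" "xtyp st [] v (TTensor A B)" "xtyp st [(x, A), (y, B)] t C"
  using assms by (induction st "[] :: ctx" "DTens e v x y t" C rule: xtyp.induct) auto

lemma xtyp_Nil_PairE:
  assumes "xtyp st [] (Pair v w) C"
  obtains A B where "C = TTensor A B" "isval v" "isval w" "xtyp st [] v A" "xtyp st [] w B"
  using assms by (induction st "[] :: ctx" "Pair v w" C rule: xtyp.induct) auto

lemma xtyp_Nil_DOneE:
  assumes "xtyp st [] (DOne e v t) C"
  obtains "varpi C = e" "xtyp st [] t C"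
  using assms by (induction st "[] :: ctx" "DOne e v t" C rule: xtyp.induct) auto

lemma xtyp_Nil_DSumE:
  assumes "xtyp st [] (DSum e v x t y u) C"
  obtains A B where "varpi C = e" "xtyp st [] v (TPlus A B)" "xtyp st [(x, A)] t C" "xtyp st [(y, B)] u C"
  using assms by (induction st "[] :: ctx" "DSum e v x t y u" C rule: xtyp.induct) auto

lemma xtyp_Nil_Inj1E:
  assumes "xtyp st [] (Inj1 v) C"
  obtains A B where "C = TPlus A B" "isval v" "xtyp st [] v A"
  using assms by (induction st "[] :: ctx" "Inj1 v" C rule: xtyp.induct) auto

lemma xtyp_Nil_Inj2E:
  assumes "xtyp st [] (Inj2 v) C"
  obtains A B where "C = TPlus A B" "isval v" "xtyp st [] v B"
  using assms by (induction st "[] :: ctx" "Inj2 v" C rule: xtyp.induct) auto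

lemma xtyp_NewD: "xtyp st \<Gamma> New C \<Longrightarrow> C = TLolli TOne (TPlus TR TOne)"
  by (induction st \<Gamma> New C rule: xtyp.induct) auto

lemma xtyp_DeleteD: "xtyp st \<Gamma> Delete C \<Longrightarrow> C = TLolli TR TOne"
  by (induction st \<Gamma> Delete C rule: xtyp.induct) auto

inductive_cases styp_FArgE: "styp st (FArg e v # s) T C"
inductive_cases styp_FLetE: "styp st (FLet e x t # s) T C"
inductive_cases styp_FPrj1E: "styp st (FPrj1 e # s) T C"
inductive_cases styp_FPrj2E: "styp st (FPrj2 e # s) T C"

lemma ctypI: "varpi B = e \<Longrightarrow> xtyp st [] t B \<Longrightarrow> styp st s B A \<Longrightarrow> ctyp st (t, s, l, e) A"
  by (auto simp: ctyp_def ptyp_eq_xtyp)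

lemma ctypE:
  assumes "ctyp st (t, s, l, e) A"
  obtains B where "varpi B = e" "xtyp st [] t B" "styp st s B A"
  using assms by (auto simp: ctyp_def ptyp_eq_xtyp)

lemma xtyp_Nil_contract:
  "xtyp st [] (Let Neg e x v t) B \<Longrightarrow> xtyp st [] (subst1 v x t) B"
  "xtyp st [] (DTens e (Pair v w) x y t) B \<Longrightarrow> xtyp st [] (subst2 v x w y t) B"
  "xtyp st [] (DOne e Unit t) B \<Longrightarrow> xtyp st [] t B"
  "xtyp st [] (DSum e (Inj1 v) x t y u) B \<Longrightarrow> xtyp st [] (subst1 v x t) B"
  "xtyp st [] (DSum e (Inj2 v) x t y u) B \<Longrightarrow> xtyp st [] (subst1 v y u) B"
  by (auto elim!: xtyp_Nil_LetE xtyp_Nil_DTensE xtyp_Nil_PairE xtyp_Nil_DOneE xtyp_Nil_DSumE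
      xtyp_Nil_Inj1E xtyp_Nil_Inj2E intro: xtyp_subst1 xtyp_subst2 xtyp_Neg_isval)

lemma red_preserves_ctyp:
  assumes red: "red c c'" and typed: "ctyp st c A"
  shows "ctyp st c' A"
  using red
proof cases
  case r_letp
  with typed show ?thesis
    by (auto simp: ptyp_eq_xtyp elim!: ctypE xtyp_Nil_LetE intro!: ctypI s_let)
next
  case r_pop
  with typed show ?thesis
    by (auto simp: ptyp_eq_xtyp elim!: ctypE styp_FLetE intro!: ctypI xtyp_subst1)
next
  case r_app
  with typed show ?thesis
    by (auto simp: ptyp_eq_xtyp elim!: ctypE xtyp_Nil_AppE intro!: ctypI s_arg)
next
  case r_lam
  with typed show ?thesis
    by (auto simp: ptyp_eq_xtyp elim!: ctypE xtyp_Nil_LamE styp_FArgE intro!: ctypI xtyp_subst1)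
next
  case r_prj1
  with typed show ?thesis
    by (auto elim!: ctypE xtyp_Nil_Prj1E intro!: ctypI s_prj1)
next
  case r_prj2
  with typed show ?thesis
    by (auto elim!: ctypE xtyp_Nil_Prj2E intro!: ctypI s_prj2)
next
  case r_wth1
  with typed show ?thesis
    by (auto elim!: ctypE xtyp_Nil_WthE styp_FPrj1E intro!: ctypI)
next
  case r_wth2
  with typed show ?thesis
    by (auto elim!: ctypE xtyp_Nil_WthE styp_FPrj2E intro!: ctypI)
next
  case r_new1
  with typed show ?thesis
    by (auto dest!: xtyp_NewD elim!: ctypE styp_FArgE intro!: ctypI x_inj1 x_res)
next
  case r_new2
  with typed show ?thesis
    by (auto dest!: xtyp_NewD elim!: ctypE styp_FArgE intro!: ctypI x_inj2 x_unit)
next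
  case r_delete
  with typed show ?thesis
    by (auto dest!: xtyp_DeleteD elim!: ctypE styp_FArgE intro!: ctypI x_unit)
qed (use typed in \<open>auto elim!: ctypE intro!: ctypI intro: xtyp_Nil_contract\<close>)

theorem theorem2:
  shows "(\<forall>A c1 c2. ctyp True c1 A \<and> red c1 c2 \<longrightarrow> ctyp True c2 A) \<and>
         (\<forall>A c1 c2. ctyp False c1 A \<and> red c1 c2 \<longrightarrow> ctyp False c2 A)"
  using red_preserves_ctyp by blast

end
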